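(* Let $\epsilon>0$, $\epsilon_1=\epsilon/(2+\epsilon)$ and $\epsilon_5=\epsilon_1/(4k-2)$. For $u,v,w\in V\setminus D$, let $P=\pi_{G-D}(u,v)\circ\pi_{G-D}(v,w)$. If $P$ is $\epsilon_1$-far away from $V(H)$, then $P$ is an $\epsilon_5$-segment bipath.
   Context: $G=(V,E)$ is an undirected graph with $n\ge3$ vertices and real edge weights in $[1,W]$; shortest paths in every subgraph are assumed unique; $\pi_{G'}(x,y)$ is the shortest $x$-$y$ path in $G'$, $\delta_{G'}$ its length, $\circ$ path concatenation, $|P|$ weighted length, $P[a,b]$ the subpath between $a,b$, $G-R$ the graph with vertex set $R$ deleted. Let $k=\ln n$. For $R\subseteq V$, $S\subseteq V\setminus R$, an $S$-restricted tree cover of $G-R$ is a family $\{T(w):w\in S\}$ of trees, $T(w)$ a subtree of $G-R$ rooted at $w$, such that (i) for all $u\in S$, $v\in V\setminus R$ there is $w\in S$ with $u,v\in V(T(w))$ and $\mathrm{dep}_{T(w)}(u)+\mathrm{dep}_{T(w)}(v)\le(2k-1)\delta_{G-R}(u,v)$ ($\mathrm{dep}_T(x)$ = weighted distance from $x$ to the root); (ii) each vertex lies in at most $kn^{1/k}(\ln n+1)$ trees. A vertex of such a tree $T$ is a trunk vertex if it lies on the $T$-path between two vertices of $S$; $\mathrm{Trunk}(T)$ is the subtree induced by trunk vertices; $\mathrm{pdeg}_T(v)$ is the degree of $v$ in $\mathrm{Trunk}(T)$ (0 if not trunk). Fix an integer $d\ge2$, a constant $c\ge1$, $s=4e d^{c+1}\ln^2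 n+1$; $\mathrm{Hi}(\mathcal{C})$ is the set of vertices of pseudo-degree $>s$ in some tree of a tree cover $\mathcal{C}$. Fixed tree covers: $\mathcal{T}(S)$ ($S$-restricted, of $G$) and $\mathcal{T}_R(S)$ ($(S\setminus R)$-restricted, of $G-R$), $\mathcal{T}_\varnothing(S)=\mathcal{T}(S)$. Hierarchy tree: root $V$; a node $U$ is a leaf if $\mathrm{Hi}(\mathcal{T}(U))=\varnothing$, else it has children $W_1=\mathrm{Hi}(\mathcal{T}(U))$, $W_i=W_{i-1}\cup\mathrm{Hi}(\mathcal{T}_{W_{i-1}}(U))$ ($2\le i\le d$), recursively. Let $D\subseteq V$, $|D|\le d$, and fix a root-to-node path $V=U_1,\dots,U_p$ in the hierarchy tree, $U_{p+1}=\varnothing$, such that every $f\in D$ has pseudo-degree $\le s$ in every tree of $\mathcal{T}:=\bigcup_{i=1}^p\mathcal{T}_{U_{i+1}}(U_i)$. Level $l(v)$ = largest $l$ with $v\in U_l$; $G_i$ = subgraph induced by vertices of level $\le i$. Let $s_0,t_0\in V\setminus D$ be query vertices; for $f\in D$, $T\in\mathcal{T}$ containing $f$, $N_T(f)=\{\mathrm{parent}_T(f)\}\cup(\mathrm{children}_T(f)\cap\mathrm{Trunk}(T))$, $N(f)=\bigcup_TN_T(f)$, $V(H)=(\{s_0,t_0\}\cup\bigcup_{f\in D}N(f))\setminus D$. A path $P$ from $a$ to $b$ is $\eta$-far away from $V(H)$ if there are no $x\in P\setminus\{a,b\}$, $w\in V(H)$ with $\delta_{G-D}(x,w)\le\eta\min\{|P[a,x]|,|P[x,b]|\}$.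 $\eta$-segments of $P=(a=v_0,\dots,v_\ell=b)$: for $1\le i,j<\ell$, $v_i,v_j$ are in the same segment if either both $|P[a,v_i]|,|P[a,v_j]|\le|P|/2$ with equal $\lfloor\log_{1+\eta}|P[a,\cdot]|\rfloor$, or both $|P[v_i,b]|,|P[v_j,b]|<|P|/2$ with equal $\lfloor\log_{1+\eta}|P[\cdot,b]|\rfloor$; classes are contiguous, $a,b$ in no segment. $P$ is an $\eta$-segment bipath if for every $\eta$-segment $P[x,y]$ there are levels $1\le i,j\le p$ and $z\in P[x,y]$ with $P[x,y]=\pi_{G_i}(x,z)\circ\pi_{G_j}(z,y)$. *)

theory Defs
  imports Complex_Main
begin

text \<open>A subgraph is given by a
  vertex set X and an edge set F; the induced subgraph G[X] (e.g. G - R = G[V - R]) is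
  obtained with F = E (walks are required to stay inside X).\<close>

definition walk :: "'a set \<Rightarrow> 'a set set \<Rightarrow> 'a list \<Rightarrow> bool" where
  "walk X F p \<longleftrightarrow> p \<noteq> [] \<and> set p \<subseteq> X \<and> (\<forall>i. Suc i < length p \<longrightarrow> {p ! i, p ! Suc i} \<in> F)"

definition walk_betw :: "'a set \<Rightarrow> 'a set set \<Rightarrow> 'a \<Rightarrow> 'a \<Rightarrow> 'a list \<Rightarrow> bool" where
  "walk_betw X F x y p \<longleftrightarrow> walk X F p \<and> hd p = x \<and> last p = y"

definition wlen :: "('a set \<Rightarrow> real) \<Rightarrow> 'a list \<Rightarrow> real" where
  "wlen wt p = (\<Sum>i<length p - 1. wt {p ! i, p ! Suc i})"

definition reach :: "'a set \<Rightarrow> 'a set set \<Rightarrow> 'a \<Rightarrow> 'a \<Rightarrow> bool" where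
  "reach X F x y \<longleftrightarrow> (\<exists>p. walk_betw X F x y p)"

definition is_sp :: "'a set \<Rightarrow> 'a set set \<Rightarrow> ('a set \<Rightarrow> real) \<Rightarrow> 'a \<Rightarrow> 'a \<Rightarrow> 'a list \<Rightarrow> bool" where
  "is_sp X F wt x y p \<longleftrightarrow> walk_betw X F x y p \<and>
     (\<forall>q. walk_betw X F x y q \<longrightarrow> wlen wt p \<le> wlen wt q)"

definition sp :: "'a set \<Rightarrow> 'a set set \<Rightarrow> ('a set \<Rightarrow> real) \<Rightarrow> 'a \<Rightarrow> 'a \<Rightarrow> 'a list" where
  "sp X F wt x y = (THE p. is_sp X F wt x y p)"

text \<open>distance \<delta>_{(X,F)}(x,y) (meaningful when y is reachable from x)\<close>
definition dist :: "'a set \<Rightarrow> 'a set set \<Rightarrow> ('a set \<Rightarrow> real) \<Rightarrow> 'a \<Rightarrow> 'a \<Rightarrow> real" where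
  "dist X F wt x y = Inf {wlen wt q | q. walk_betw X F x y q}"

definition pcat :: "'a list \<Rightarrow> 'a list \<Rightarrow> 'a list" where
  "pcat p q = p @ tl q"

definition subpath :: "'a list \<Rightarrow> nat \<Rightarrow> nat \<Rightarrow> 'a list" where
  "subpath P a b = take (b - a + 1) (drop a P)"

definition wgraph :: "'a set \<Rightarrow> 'a set set \<Rightarrow> ('a set \<Rightarrow> real) \<Rightarrow> real \<Rightarrow> bool" where
  "wgraph V E wt W \<longleftrightarrow> finite V \<and> card V \<ge> 3 \<and>
     (\<forall>e\<in>E. \<exists>x y. e = {x, y} \<and> x \<noteq> y \<and> x \<in> V \<and> y \<in> V) \<and>
     (\<forall>e\<in>E. 1 \<le> wt e \<and> wt e \<le> W) \<and>
     (\<forall>X F x y. X \<subseteq> V \<longrightarrow> F \<subseteq> E \<longrightarrow> reach X F x y \<longrightarrow> (\<exists>!p. is_sp X F wt x y p))"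

definition kk :: "'a set \<Rightarrow> real" where
  "kk V = ln (real (card V))"

type_synonym 'a tree = "'a set \<times> 'a set set \<times> 'a"

definition tverts :: "'a tree \<Rightarrow> 'a set" where "tverts T = fst T"
definition tedges :: "'a tree \<Rightarrow> 'a set set" where "tedges T = fst (snd T)"
definition troot :: "'a tree \<Rightarrow> 'a" where "troot T = snd (snd T)"

definition is_tree :: "'a set \<Rightarrow> 'a set set \<Rightarrow> 'a tree \<Rightarrow> bool" where
  "is_tree X E T \<longleftrightarrow> finite (tverts T) \<and> tverts T \<subseteq> X \<and> tedges T \<subseteq> E \<and>
     (\<forall>e\<in>tedges T. e \<subseteq> tverts T) \<and> troot T \<in> tverts T \<and>
     (\<forall>x\<in>tverts T. reach (tverts T) (tedges T) (troot T) x) \<and>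
     card (tedges T) + 1 = card (tverts T)"

definition tpath :: "'a tree \<Rightarrow> 'a \<Rightarrow> 'a \<Rightarrow> 'a list" where
  "tpath T a b = (THE p. walk_betw (tverts T) (tedges T) a b p \<and> distinct p)"

definition dep :: "('a set \<Rightarrow> real) \<Rightarrow> 'a tree \<Rightarrow> 'a \<Rightarrow> real" where
  "dep wt T x = wlen wt (tpath T (troot T) x)"

definition tparent :: "'a tree \<Rightarrow> 'a \<Rightarrow> 'a" where
  "tparent T f = tpath T f (troot T) ! 1"

definition tchildren :: "'a tree \<Rightarrow> 'a \<Rightarrow> 'a set" where
  "tchildren T f = {c \<in> tverts T. c \<noteq> troot T \<and> tparent T c = f}"

definition trunk :: "'a tree \<Rightarrow> 'a set \<Rightarrow> 'a set" where
  "trunk T S = {x. \<exists>a\<in>S \<inter> tverts T. \<exists>b\<in>S \<inter> tverts T. x \<in> set (tpath T a b)}"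

definition pdeg :: "'a tree \<Rightarrow> 'a set \<Rightarrow> 'a \<Rightarrow> nat" where
  "pdeg T S v = (if v \<in> trunk T S then card {e \<in> tedges T. v \<in> e \<and> e \<subseteq> trunk T S} else 0)"

text \<open>C is an S-restricted tree cover of G - R (the family {C w : w \<in> S}).
  Condition (i) is required for pairs u,v connected in G - R.\<close>
definition tree_cover :: "'a set \<Rightarrow> 'a set set \<Rightarrow> ('a set \<Rightarrow> real) \<Rightarrow> 'a set \<Rightarrow> 'a set \<Rightarrow> ('a \<Rightarrow> 'a tree) \<Rightarrow> bool" where
  "tree_cover V E wt R S C \<longleftrightarrow> S \<subseteq> V - R \<and>
     (\<forall>x\<in>S. is_tree (V - R) E (C x) \<and> troot (C x) = x) \<and>
     (\<forall>u\<in>S. \<forall>v\<in>V - R. reach (V - R) E u v \<longrightarrow>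
        (\<exists>x\<in>S. u \<in> tverts (C x) \<and> v \<in> tverts (C x) \<and>
           dep wt (C x) u + dep wt (C x) v \<le> (2 * kk V - 1) * dist (V - R) E wt u v)) \<and>
     (\<forall>v. real (card {x\<in>S. v \<in> tverts (C x)})
            \<le> kk V * real (card V) powr (1 / kk V) * (ln (real (card V)) + 1))"

text \<open>TC R S is the fixed tree cover \<T>_R(S), an (S - R)-restricted tree cover of G - R;
  \<T>(S) = TC {} S.\<close>
definition fixed_covers :: "'a set \<Rightarrow> 'a set set \<Rightarrow> ('a set \<Rightarrow> real) \<Rightarrow> ('a set \<Rightarrow> 'a set \<Rightarrow> 'a \<Rightarrow> 'a tree) \<Rightarrow> bool" where
  "fixed_covers V E wt TC \<longleftrightarrow>
     (\<forall>R S. R \<subseteq> V \<longrightarrow> S \<subseteq> V \<longrightarrow> tree_cover V E wt R (S - R) (TC R S))"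

definition sbound :: "nat \<Rightarrow> real \<Rightarrow> nat \<Rightarrow> real" where
  "sbound d c n = 4 * exp 1 * real d powr (c + 1) * (ln (real n))\<^sup>2 + 1"

definition Hi :: "('a set \<Rightarrow> 'a set \<Rightarrow> 'a \<Rightarrow> 'a tree) \<Rightarrow> real \<Rightarrow> 'a set \<Rightarrow> 'a set \<Rightarrow> 'a set" where
  "Hi TC s R S = {v. \<exists>x\<in>S - R. real (pdeg (TC R S x) (S - R) v) > s}"

text \<open>W_0 = {} (so that \<T>_{W_0} = \<T>), W_1 = Hi(\<T>(U)), W_i = W_{i-1} \<union> Hi(\<T>_{W_{i-1}}(U))\<close>
primrec Wseq :: "('a set \<Rightarrow> 'a set \<Rightarrow> 'a \<Rightarrow> 'a tree) \<Rightarrow> real \<Rightarrow> 'a set \<Rightarrow> nat \<Rightarrow> 'a set" where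
  "Wseq TC s U 0 = {}"
| "Wseq TC s U (Suc i) = Wseq TC s U i \<union> Hi TC s (Wseq TC s U i) U"

definition hchild :: "('a set \<Rightarrow> 'a set \<Rightarrow> 'a \<Rightarrow> 'a tree) \<Rightarrow> real \<Rightarrow> nat \<Rightarrow> 'a set \<Rightarrow> 'a set \<Rightarrow> bool" where
  "hchild TC s d U U' \<longleftrightarrow> Hi TC s {} U \<noteq> {} \<and> (\<exists>i\<in>{1..d}. U' = Wseq TC s U i)"

text \<open>U_1,...,U_p is a root-to-node path of the hierarchy tree; U_{p+1} = {}\<close>
definition hpath :: "'a set \<Rightarrow> ('a set \<Rightarrow> 'a set \<Rightarrow> 'a \<Rightarrow> 'a tree) \<Rightarrow> real \<Rightarrow> nat \<Rightarrow> (nat \<Rightarrow> 'a set) \<Rightarrow> nat \<Rightarrow> bool" where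
  "hpath V TC s d U p \<longleftrightarrow> 1 \<le> p \<and> U 1 = V \<and> U (Suc p) = {} \<and>
     (\<forall>i. 1 \<le> i \<and> i < p \<longrightarrow> hchild TC s d (U i) (U (Suc i)))"

text \<open>index set of the trees of \<T> = \<Union>_{i=1..p} \<T>_{U_{i+1}}(U_i): the tree with index (i,x)
  is TC (U (i+1)) (U i) x, whose restriction set is U i - U (i+1).\<close>
definition tidx :: "(nat \<Rightarrow> 'a set) \<Rightarrow> nat \<Rightarrow> (nat \<times> 'a) set" where
  "tidx U p = {(i, x). 1 \<le> i \<and> i \<le> p \<and> x \<in> U i - U (Suc i)}"

definition D_ok :: "('a set \<Rightarrow> 'a set \<Rightarrow> 'a \<Rightarrow> 'a tree) \<Rightarrow> real \<Rightarrow> (nat \<Rightarrow> 'a set) \<Rightarrow> nat \<Rightarrow> 'a set \<Rightarrow> bool" where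
  "D_ok TC s U p D \<longleftrightarrow> (\<forall>(i, x)\<in>tidx U p. \<forall>f\<in>D.
      real (pdeg (TC (U (Suc i)) (U i) x) (U i - U (Suc i)) f) \<le> s)"

definition NT :: "'a tree \<Rightarrow> 'a set \<Rightarrow> 'a \<Rightarrow> 'a set" where
  "NT T S f = (if f \<noteq> troot T then {tparent T f} else {}) \<union> (tchildren T f \<inter> trunk T S)"

definition Nf :: "('a set \<Rightarrow> 'a set \<Rightarrow> 'a \<Rightarrow> 'a tree) \<Rightarrow> (nat \<Rightarrow> 'a set) \<Rightarrow> nat \<Rightarrow> 'a \<Rightarrow> 'a set" where
  "Nf TC U p f = (\<Union>(i, x)\<in>{(i, x)\<in>tidx U p. f \<in> tverts (TC (U (Suc i)) (U i) x)}.
      NT (TC (U (Suc i)) (U i) x) (U i - U (Suc i)) f)"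

definition VH :: "('a set \<Rightarrow> 'a set \<Rightarrow> 'a \<Rightarrow> 'a tree) \<Rightarrow> (nat \<Rightarrow> 'a set) \<Rightarrow> nat \<Rightarrow> 'a set \<Rightarrow> 'a \<Rightarrow> 'a \<Rightarrow> 'a set" where
  "VH TC U p D s0 t0 = ({s0, t0} \<union> (\<Union>f\<in>D. Nf TC U p f)) - D"

text \<open>levels and the graphs G_i (vertex sets; G_i is the induced subgraph)\<close>
definition level :: "(nat \<Rightarrow> 'a set) \<Rightarrow> nat \<Rightarrow> 'a \<Rightarrow> nat" where
  "level U p v = (GREATEST l. 1 \<le> l \<and> l \<le> p \<and> v \<in> U l)"

definition Lev :: "'a set \<Rightarrow> (nat \<Rightarrow> 'a set) \<Rightarrow> nat \<Rightarrow> nat \<Rightarrow> 'a set" where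
  "Lev V U p i = {v\<in>V. level U p v \<le> i}"

text \<open>P (from a = P!0 to b = last P) is \<eta>-far away from the set H (distances in G - D).
  Interior vertices are interior positions of P.\<close>
definition far_away :: "'a set \<Rightarrow> 'a set set \<Rightarrow> ('a set \<Rightarrow> real) \<Rightarrow> 'a set \<Rightarrow> 'a set \<Rightarrow> real \<Rightarrow> 'a list \<Rightarrow> bool" where
  "far_away V E wt D H \<eta> P \<longleftrightarrow> \<not> (\<exists>j. 0 < j \<and> j < length P - 1 \<and> (\<exists>y\<in>H.
      reach (V - D) E (P ! j) y \<and>
      dist (V - D) E wt (P ! j) y \<le> \<eta> * min (wlen wt (take (Suc j) P)) (wlen wt (drop j P))))"

definition same_seg :: "('a set \<Rightarrow> real) \<Rightarrow> real \<Rightarrow> 'a list \<Rightarrow> nat \<Rightarrow> nat \<Rightarrow> bool" where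
  "same_seg wt \<eta> P i j \<longleftrightarrow> 1 \<le> i \<and> i < length P - 1 \<and> 1 \<le> j \<and> j < length P - 1 \<and>
     ((wlen wt (take (Suc i) P) \<le> wlen wt P / 2 \<and> wlen wt (take (Suc j) P) \<le> wlen wt P / 2 \<and>
       \<lfloor>log (1 + \<eta>) (wlen wt (take (Suc i) P))\<rfloor> = \<lfloor>log (1 + \<eta>) (wlen wt (take (Suc j) P))\<rfloor>) \<or>
      (wlen wt (drop i P) < wlen wt P / 2 \<and> wlen wt (drop j P) < wlen wt P / 2 \<and>
       \<lfloor>log (1 + \<eta>) (wlen wt (drop i P))\<rfloor> = \<lfloor>log (1 + \<eta>) (wlen wt (drop j P))\<rfloor>))"

definition segments :: "('a set \<Rightarrow> real) \<Rightarrow> real \<Rightarrow> 'a list \<Rightarrow> nat set set" where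
  "segments wt \<eta> P = {{j. same_seg wt \<eta> P i j} | i. 1 \<le> i \<and> i < length P - 1}"

definition seg_bipath :: "'a set \<Rightarrow> 'a set set \<Rightarrow> ('a set \<Rightarrow> real) \<Rightarrow> (nat \<Rightarrow> 'a set) \<Rightarrow> nat \<Rightarrow> real \<Rightarrow> 'a list \<Rightarrow> bool" where
  "seg_bipath V E wt U p \<eta> P \<longleftrightarrow> (\<forall>C\<in>segments wt \<eta> P.
     \<exists>i j m. 1 \<le> i \<and> i \<le> p \<and> 1 \<le> j \<and> j \<le> p \<and> Min C \<le> m \<and> m \<le> Max C \<and>
       reach (Lev V U p i) E (P ! Min C) (P ! m) \<and>
       reach (Lev V U p j) E (P ! m) (P ! Max C) \<and>
       subpath P (Min C) (Max C) =
         pcat (sp (Lev V U p i) E wt (P ! Min C) (P ! m)) (sp (Lev V U p j) E wt (P ! m) (P ! Max C)))"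

end

theory Submission
  imports Defs
begin

text \<open>
  A segment of P has length less than \<open>\<epsilon>5\<close> times the distance along P from any of its
  vertices to the nearer end of P, because the prefix (or suffix) lengths of its vertices lie in
  one interval \<open>[(1 + \<epsilon>5)^t, (1 + \<epsilon>5)^(t+1))\<close>. Cut at the junction v, the segment
  consists of at most two subpaths of the shortest paths, so each piece Q is a shortest path of
  \<open>G - D\<close>. Let i be the largest level of a vertex of Q, attained at z; then Q lies in \<open>G_i\<close>.
  If Q were not the shortest path of \<open>G_i\<close>, a shorter walk in \<open>G_i\<close> would have to use a
  failed vertex f, giving a walk from z to f that avoids \<open>U_(i+1)\<close> and is shorter than 2|Q|.
  The tree cover of \<open>G - U_(i+1)\<close> restricted to \<open>U_i\<close> has a tree containing z and f
  with \<open>dep z + dep f \<le> (2k - 1) 2|Q|\<close>. Walking in this tree from z up to the root and down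
  to f, the vertex just before the first failed vertex met is its parent or a trunk child of it,
  hence a vertex of V(H) within distance \<open>(4k - 2)|Q| < \<epsilon>1 min(|P[a,z]|, |P[z,b]|)\<close> of z,
  contradicting that P is far away from V(H).
\<close>

section \<open>Walks and their lengths\<close>

lemma walk_Nil [simp]: "\<not> walk X F []"
  by (simp add: walk_def)

lemma walk_not_Nil: "walk X F p \<Longrightarrow> p \<noteq> []"
  by auto

lemma walk_Cons:
  "walk X F (x # xs) \<longleftrightarrow> x \<in> X \<and> (xs \<noteq> [] \<longrightarrow> {x, hd xs} \<in> F \<and> walk X F xs)"
  by (cases xs) (auto simp: walk_def nth_Cons less_Suc_eq_0_disj split: nat.splits)

lemma walk_singleton [simp]: "walk X F [x] \<longleftrightarrow> x \<in> X"
  by (simp add: walk_Cons)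

lemma walk_Cons_Cons [simp]: "walk X F (x # y # ys) \<longleftrightarrow> x \<in> X \<and> {x, y} \<in> F \<and> walk X F (y # ys)"
  by (simp add: walk_Cons)

lemma walk_append:
  "xs \<noteq> [] \<Longrightarrow> ys \<noteq> [] \<Longrightarrow>
    walk X F (xs @ ys) \<longleftrightarrow> walk X F xs \<and> {last xs, hd ys} \<in> F \<and> walk X F ys"
proof (induction xs)
  case (Cons x xs)
  then show ?case by (cases xs) (auto simp: walk_Cons)
qed simp

lemma walk_appendD:
  assumes "walk X F (xs @ ys)"
  shows "xs \<noteq> [] \<Longrightarrow> walk X F xs" and "ys \<noteq> [] \<Longrightarrow> walk X F ys"
  using assms walk_append[of xs ys X F] by (cases "xs = []"; cases "ys = []"; simp)+

lemma walk_pcat: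
  assumes "walk X F p" "walk X F q" "last p = hd q"
  shows "walk X F (pcat p q)"
proof (cases "tl q = []")
  case False
  with assms(2) have "{hd q, hd (tl q)} \<in> F \<and> walk X F (tl q)"
    by (cases q) (auto simp: walk_Cons)
  with assms False show ?thesis
    by (cases "p = []") (auto simp: pcat_def walk_append)
qed (use assms in \<open>simp add: pcat_def\<close>)

lemma walk_rev: "walk X F p \<Longrightarrow> walk X F (rev p)"
proof (induction p)
  case (Cons x xs)
  show ?case
  proof (cases "xs = []")
    case False
    with Cons have "walk X F (rev xs) \<and> {hd xs, x} \<in> F \<and> x \<in> X"
      by (auto simp: walk_Cons insert_commute)
    with False show ?thesis
      by (simp add: walk_append last_rev)
  qed (use Cons in simp)
qed simp

lemma walk_take: "walk X F p \<Longrightarrow> 0 < n \<Longrightarrow> walk X F (take n p)"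
  using walk_append[of "take n p" "drop n p" X F] by (cases "n < length p"; cases p) auto

lemma walk_drop: "walk X F p \<Longrightarrow> n < length p \<Longrightarrow> walk X F (drop n p)"
  using walk_append[of "take n p" "drop n p" X F] by (cases "n = 0"; cases p) auto

lemma walk_mono: "walk X F p \<Longrightarrow> set p \<subseteq> Y \<Longrightarrow> F \<subseteq> F' \<Longrightarrow> walk Y F' p"
  unfolding walk_def by auto

lemma hd_pcat: "p \<noteq> [] \<Longrightarrow> hd (pcat p q) = hd p"
  by (simp add: pcat_def)

lemma last_pcat: "p \<noteq> [] \<Longrightarrow> q \<noteq> [] \<Longrightarrow> last p = hd q \<Longrightarrow> last (pcat p q) = last q"
  by (cases q; cases "tl q") (auto simp: pcat_def)

lemma walk_betw_pcat:
  "walk_betw X F x y p \<Longrightarrow> walk_betw X F y z q \<Longrightarrow> walk_betw X F x z (pcat p q)"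
  unfolding walk_betw_def by (metis walk_Nil walk_pcat hd_pcat last_pcat)

lemma walk_betw_rev: "walk_betw X F x y p \<Longrightarrow> walk_betw X F y x (rev p)"
  unfolding walk_betw_def by (auto intro!: walk_rev simp: hd_rev last_rev)

lemma walk_betw_appendD:
  assumes "walk_betw X F x y (xs @ ys)"
  shows "xs \<noteq> [] \<Longrightarrow> walk_betw X F x (last xs) xs" and "ys \<noteq> [] \<Longrightarrow> walk_betw X F (hd ys) y ys"
  using assms walk_appendD[of X F xs ys] by (auto simp: walk_betw_def)

lemma walk_betw_Diff: "walk_betw X F x y p \<Longrightarrow> \<forall>v\<in>set p. v \<notin> D \<Longrightarrow> walk_betw (X - D) F x y p"
  unfolding walk_betw_def walk_def by auto

lemma wlen_Nil [simp]: "wlen wt [] = 0"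
  by (simp add: wlen_def)

lemma wlen_singleton [simp]: "wlen wt [x] = 0"
  by (simp add: wlen_def)

lemma wlen_Cons_Cons [simp]: "wlen wt (x # y # ys) = wt {x, y} + wlen wt (y # ys)"
  unfolding wlen_def by (simp add: sum.lessThan_Suc_shift del: sum.lessThan_Suc)

lemma wlen_append:
  "xs \<noteq> [] \<Longrightarrow> ys \<noteq> [] \<Longrightarrow> wlen wt (xs @ ys) = wlen wt xs + wt {last xs, hd ys} + wlen wt ys"
  by (induction xs rule: induct_list012) (auto simp: neq_Nil_conv)

lemma wlen_pcat: "p \<noteq> [] \<Longrightarrow> last p = hd q \<Longrightarrow> wlen wt (pcat p q) = wlen wt p + wlen wt q"
  by (cases q; cases "tl q") (auto simp: pcat_def wlen_append)

lemma wlen_walk_betw_pcat: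
  "walk_betw X F x y p \<Longrightarrow> walk_betw X F y z q \<Longrightarrow> wlen wt (pcat p q) = wlen wt p + wlen wt q"
  unfolding walk_betw_def by (metis wlen_pcat walk_Nil)

lemma wlen_rev: "wlen wt (rev p) = wlen wt p"
proof (induction p)
  case (Cons x xs)
  then show ?case
    by (cases "xs = []") (auto simp: wlen_append last_rev insert_commute neq_Nil_conv)
qed simp

lemma wlen_nonneg: "walk X F p \<Longrightarrow> \<forall>e\<in>F. 0 \<le> wt e \<Longrightarrow> 0 \<le> wlen wt p"
  unfolding wlen_def walk_def by (auto intro!: sum_nonneg)

lemma wlen_append_ge:
  assumes "walk X F (xs @ ys)" "\<forall>e\<in>F. 0 \<le> wt e"
  shows "wlen wt xs \<le> wlen wt (xs @ ys)" "wlen wt ys \<le> wlen wt (xs @ ys)"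
proof -
  consider "xs = []" | "ys = []" | "xs \<noteq> []" "ys \<noteq> []" by blast
  then have "wlen wt xs \<le> wlen wt (xs @ ys) \<and> wlen wt ys \<le> wlen wt (xs @ ys)"
  proof cases
    case 3
    then have "walk X F xs" "{last xs, hd ys} \<in> F" "walk X F ys"
      using assms(1) walk_append by blast+
    then show ?thesis
      using 3 assms(2) wlen_nonneg[of X F _ wt] by (simp add: wlen_append)
  qed (use assms wlen_nonneg in auto)
  then show "wlen wt xs \<le> wlen wt (xs @ ys)" "wlen wt ys \<le> wlen wt (xs @ ys)"
    by simp_all
qed

lemma wlen_take_drop:
  assumes "a + n \<le> length P"
  shows "wlen wt (take n (drop a P)) = (\<Sum>l\<in>{a..<a+n-1}. wt {P ! l, P ! Suc l})"
proof -
  have "wlen wt (take n (drop a P)) = (\<Sum>l<n-1. wt {P ! (l + a), P ! Suc (l + a)})"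
    unfolding wlen_def using assms by (intro sum.cong) (auto simp: add.commute)
  also have "\<dots> = (\<Sum>l\<in>{0+a..<(n-1)+a}. wt {P ! l, P ! Suc l})"
    by (subst sum.shift_bounds_nat_ivl) (simp add: lessThan_atLeast0)
  also have "{0+a..<(n-1)+a} = {a..<a+n-1}"
    by auto
  finally show ?thesis .
qed

lemma wlen_take: "n \<le> length P \<Longrightarrow> wlen wt (take n P) = (\<Sum>l\<in>{0..<n-1}. wt {P ! l, P ! Suc l})"
  using wlen_take_drop[of 0 n P wt] by simp

lemma wlen_drop:
  "a \<le> length P \<Longrightarrow> wlen wt (drop a P) = (\<Sum>l\<in>{a..<length P - 1}. wt {P ! l, P ! Suc l})"
  using wlen_take_drop[of a "length P - a" P wt] by (cases "a = length P") auto

lemma wlen_subpath: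
  "i \<le> j \<Longrightarrow> j < length P \<Longrightarrow> wlen wt (subpath P i j) = (\<Sum>l\<in>{i..<j}. wt {P ! l, P ! Suc l})"
  unfolding subpath_def using wlen_take_drop[of i "j - i + 1" P wt] by auto

lemma wlen_split3:
  assumes "i \<le> j" "j < length P"
  shows "wlen wt P = wlen wt (take (Suc i) P) + wlen wt (subpath P i j) + wlen wt (drop j P)"
proof -
  have "wlen wt P = (\<Sum>l\<in>{0..<length P - 1}. wt {P ! l, P ! Suc l})"
    using wlen_drop[of 0 P wt] by simp
  also have "\<dots> = (\<Sum>l\<in>{0..<i}. wt {P ! l, P ! Suc l}) + (\<Sum>l\<in>{i..<j}. wt {P ! l, P ! Suc l})
      + (\<Sum>l\<in>{j..<length P - 1}. wt {P ! l, P ! Suc l})"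
    using assms by (simp add: sum.atLeastLessThan_concat)
  finally show ?thesis
    using assms wlen_take[of "Suc i" P wt] wlen_subpath[OF assms, of wt] wlen_drop[of j P wt] by simp
qed

lemma wlen_take_Suc_add_drop:
  "j < length P \<Longrightarrow> wlen wt (take (Suc j) P) + wlen wt (drop j P) = wlen wt P"
  using wlen_split3[of j j P wt] wlen_subpath[of j j P wt] by simp

lemma wlen_subpath_eq_diff:
  "i \<le> j \<Longrightarrow> j < length P \<Longrightarrow>
    wlen wt (subpath P i j) = wlen wt (take (Suc j) P) - wlen wt (take (Suc i) P)"
  using wlen_split3[of i j P wt] wlen_take_Suc_add_drop[of j P wt] by simp

lemma walk_wt_ge_1:
  "walk X F P \<Longrightarrow> \<forall>e\<in>F. 1 \<le> wt e \<Longrightarrow> Suc l < length P \<Longrightarrow> 1 \<le> wt {P ! l, P ! Suc l}"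
  unfolding walk_def by blast

lemma wlen_subpath_mono:
  assumes "walk X F P" "\<forall>e\<in>F. 1 \<le> wt e" "i \<le> i'" "i' \<le> j'" "j' \<le> j" "j < length P"
  shows "wlen wt (subpath P i' j') \<le> wlen wt (subpath P i j)"
  using assms walk_wt_ge_1[OF assms(1,2)]
  by (auto simp: wlen_subpath intro!: sum_mono2 order.trans[OF zero_le_one])

lemma wlen_take_Suc_ge:
  assumes "walk X F P" "\<forall>e\<in>F. 1 \<le> wt e" "j < length P"
  shows "real j \<le> wlen wt (take (Suc j) P)"
proof -
  have "(\<Sum>l\<in>{0..<j}. 1) \<le> (\<Sum>l\<in>{0..<j}. wt {P ! l, P ! Suc l})"
    using assms walk_wt_ge_1[OF assms(1,2)] by (intro sum_mono) auto
  then show ?thesis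
    using assms(3) by (simp add: wlen_take)
qed

lemma wlen_drop_ge:
  assumes "walk X F P" "\<forall>e\<in>F. 1 \<le> wt e" "j < length P"
  shows "real (length P - 1 - j) \<le> wlen wt (drop j P)"
proof -
  have "(\<Sum>l\<in>{j..<length P - 1}. 1) \<le> (\<Sum>l\<in>{j..<length P - 1}. wt {P ! l, P ! Suc l})"
    using assms walk_wt_ge_1[OF assms(1,2)] by (intro sum_mono) auto
  then show ?thesis
    using assms(3) by (simp add: wlen_drop)
qed

lemma length_subpath: "i \<le> j \<Longrightarrow> j < length P \<Longrightarrow> length (subpath P i j) = j - i + 1"
  unfolding subpath_def by auto

lemma nth_subpath: "i \<le> j \<Longrightarrow> j < length P \<Longrightarrow> t \<le> j - i \<Longrightarrow> subpath P i j ! t = P ! (i + t)"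
  unfolding subpath_def by auto

lemma subpath_not_Nil: "i \<le> j \<Longrightarrow> j < length P \<Longrightarrow> subpath P i j \<noteq> []"
  unfolding subpath_def by auto

lemma hd_subpath: "i \<le> j \<Longrightarrow> j < length P \<Longrightarrow> hd (subpath P i j) = P ! i"
  unfolding subpath_def by (auto simp: hd_conv_nth)

lemma last_subpath: "i \<le> j \<Longrightarrow> j < length P \<Longrightarrow> last (subpath P i j) = P ! j"
  by (simp add: last_conv_nth subpath_not_Nil length_subpath nth_subpath)

lemma in_set_subpath:
  assumes "i \<le> j" "j < length P" "x \<in> set (subpath P i j)"
  obtains l where "i \<le> l" "l \<le> j" "P ! l = x"
proof -
  obtain t where "t < length (subpath P i j)" "x = subpath P i j ! t"
    using assms(3) by (auto simp: in_set_conv_nth)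
  with assms show thesis
    using that[of "i + t"] by (auto simp: length_subpath nth_subpath)
qed

lemma walk_betw_subpath:
  assumes "walk X F P" "i \<le> j" "j < length P"
  shows "walk_betw X F (P ! i) (P ! j) (subpath P i j)"
proof -
  have "walk X F (subpath P i j)"
    unfolding subpath_def using assms by (intro walk_take walk_drop) auto
  with assms show ?thesis
    by (simp add: walk_betw_def hd_subpath last_subpath)
qed

lemma wlen_take_Suc_mono:
  assumes "walk X F P" "\<forall>e\<in>F. 1 \<le> wt e" "i \<le> j" "j < length P"
  shows "wlen wt (take (Suc i) P) \<le> wlen wt (take (Suc j) P)"
proof -
  have "\<forall>e\<in>F. 0 \<le> wt e"
    using assms(2) by (meson order.trans zero_le_one)
  then have "0 \<le> wlen wt (subpath P i j)"
    using walk_betw_subpath[OF assms(1,3,4)] by (auto simp: walk_betw_def intro: wlen_nonneg)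
  then show ?thesis
    using wlen_subpath_eq_diff[OF assms(3,4), of wt] by simp
qed

lemma subpath_split:
  assumes "a \<le> m" "m \<le> b" "b < length P"
  shows "subpath P a b = pcat (subpath P a m) (subpath P m b)"
proof -
  have d: "drop (Suc m) P = drop (m - a + 1) (drop a P)"
    using assms by simp
  have "pcat (subpath P a m) (subpath P m b) = take (m - a + 1) (drop a P) @ take (b - m) (drop (Suc m) P)"
    unfolding pcat_def subpath_def by (simp add: tl_take drop_Suc tl_drop)
  also have "\<dots> = take (m - a + 1 + (b - m)) (drop a P)"
    unfolding d take_add by simp
  also have "m - a + 1 + (b - m) = b - a + 1"
    using assms by simp
  finally show ?thesis
    unfolding subpath_def by simp
qed

lemma pcat_eq_butlast_append: "p \<noteq> [] \<Longrightarrow> q \<noteq> [] \<Longrightarrow> last p = hd q \<Longrightarrow> pcat p q = butlast p @ q"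
  by (metis pcat_def append_butlast_last_id append_Cons append_assoc append_Nil list.collapse)

lemma nth_pcat_left: "j < length p \<Longrightarrow> pcat p q ! j = p ! j"
  by (simp add: pcat_def nth_append)

lemma subpath_pcat_left: "i \<le> j \<Longrightarrow> j < length p \<Longrightarrow> subpath (pcat p q) i j = subpath p i j"
  by (simp add: pcat_def subpath_def)

lemma
  assumes "p \<noteq> []" "q \<noteq> []" "last p = hd q" "length p - 1 \<le> i"
  shows nth_pcat_right: "i < length (pcat p q) \<Longrightarrow> pcat p q ! i = q ! (i - (length p - 1))"
    and subpath_pcat_right: "subpath (pcat p q) i j = subpath q (i - (length p - 1)) (j - (length p - 1))"
  using assms by (simp_all add: pcat_eq_butlast_append nth_append subpath_def)

section \<open>Reachability and trees\<close>

lemma reach_refl: "x \<in> X \<Longrightarrow> reach X F x x"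
  unfolding reach_def walk_betw_def by (rule exI[of _ "[x]"]) simp

lemma reach_sym: "reach X F x y \<Longrightarrow> reach X F y x"
  unfolding reach_def using walk_betw_rev by metis

lemma reach_trans: "reach X F x y \<Longrightarrow> reach X F y z \<Longrightarrow> reach X F x z"
  unfolding reach_def using walk_betw_pcat by metis

lemma reach_edge: "x \<in> X \<Longrightarrow> y \<in> X \<Longrightarrow> {x, y} \<in> F \<Longrightarrow> reach X F x y"
  unfolding reach_def walk_betw_def by (rule exI[of _ "[x, y]"]) simp

lemma reach_if_edges_reach:
  assumes "walk X F q" "\<And>a b. {a, b} \<in> F \<Longrightarrow> a \<in> X \<Longrightarrow> b \<in> X \<Longrightarrow> reach X F' a b"
  shows "reach X F' (hd q) (last q)"
  using assms(1)
proof (induction q rule: induct_list012)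
  case (3 x y ys)
  then show ?case
    using assms(2)[of x y] reach_trans by (auto simp: walk_Cons)
qed (auto intro: reach_refl)

lemma walk_remove_edge: "walk X F p \<Longrightarrow> a \<notin> set p \<Longrightarrow> walk X (F - {{a, z}}) p"
  unfolding walk_def by (auto simp: doubleton_eq_iff)

lemma reach_simple_walk:
  assumes "reach X F a b"
  shows "\<exists>p. walk_betw X F a b p \<and> distinct p"
proof -
  obtain p where p: "walk_betw X F a b p"
    using assms unfolding reach_def by blast
  then show ?thesis
  proof (induction p rule: length_induct)
    case (1 p)
    show ?case
    proof (cases "distinct p")
      case False
      then obtain i j where ij: "i < j" "j < length p" "p ! i = p ! j"
        by (metis distinct_conv_nth linorder_neqE_nat)
      have "last (take (Suc i) p) = p ! i"
        using ij by (simp add: take_Suc_conv_app_nth)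
      then have "walk_betw X F a (p ! i) (take (Suc i) p)" "walk_betw X F (p ! i) b (drop j p)"
        using "1.prems" ij walk_take[of X F p "Suc i"] walk_drop[of X F p j]
        by (auto simp: walk_betw_def hd_drop_conv_nth)
      then have "walk_betw X F a b (pcat (take (Suc i) p) (drop j p))"
        by (rule walk_betw_pcat)
      moreover have "length (pcat (take (Suc i) p) (drop j p)) < length p"
        using ij by (simp add: pcat_def)
      ultimately show ?thesis
        using "1.IH" by (metis (no_types, lifting))
    qed (use "1.prems" in blast)
  qed
qed

definition hops :: "'a set \<Rightarrow> 'a set set \<Rightarrow> 'a \<Rightarrow> 'a \<Rightarrow> nat" where
  "hops X F v r = (LEAST n. \<exists>q. walk_betw X F v r q \<and> length q = Suc n)"

lemma hops_walk:
  assumes "reach X F v r"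
  obtains q where "walk_betw X F v r q" "length q = Suc (hops X F v r)"
proof -
  obtain q where "walk_betw X F v r q"
    using assms unfolding reach_def by blast
  then have "\<exists>n q. walk_betw X F v r q \<and> length q = Suc n"
    by (intro exI[of _ "length q - 1"] exI[of _ q]) (auto simp: walk_betw_def dest: walk_not_Nil)
  then have "\<exists>q. walk_betw X F v r q \<and> length q = Suc (hops X F v r)"
    unfolding hops_def by (rule LeastI_ex)
  then show thesis
    using that by blast
qed

lemma hops_decrease:
  assumes "reach X F v r" "v \<noteq> r"
  obtains u where "{v, u} \<in> F" "hops X F u r < hops X F v r"
proof -
  obtain q where q: "walk_betw X F v r q" "length q = Suc (hops X F v r)"
    using hops_walk[OF assms(1)] .
  then obtain q'' where "q = v # q''"
    by (cases q) (auto simp: walk_betw_def)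
  with q assms(2) obtain u q' where q': "q = v # u # q'"
    by (cases q'') (auto simp: walk_betw_def)
  then have "walk_betw X F u r (u # q')" "{v, u} \<in> F"
    using q by (auto simp: walk_betw_def)
  moreover from this have "hops X F u r \<le> hops X F v r - 1"
    unfolding hops_def[of X F u] using q q' by (intro Least_le exI[of _ "u # q'"]) simp
  ultimately show thesis
    using that q q' by simp
qed

lemma connected_card_le:
  assumes fin: "finite Vt" and edges: "\<forall>e\<in>Et. e \<subseteq> Vt" and r: "r \<in> Vt"
    and con: "\<forall>x\<in>Vt. reach Vt Et x r"
  shows "card Vt \<le> card Et + 1"
proof -
  let ?h = "\<lambda>v. hops Vt Et v r"
  have "\<forall>v\<in>Vt - {r}. \<exists>u. {v, u} \<in> Et \<and> ?h u < ?h v"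
    using con hops_decrease by (metis Diff_iff singletonI)
  then obtain g where g: "\<forall>v\<in>Vt - {r}. {v, g v} \<in> Et \<and> ?h (g v) < ?h v"
    by (metis bchoice)
  \<comment> \<open>each non-root vertex is charged to an edge towards the root; two vertices cannot share one\<close>
  have "inj_on (\<lambda>v. {v, g v}) (Vt - {r})"
  proof (rule inj_onI)
    fix x y
    assume x: "x \<in> Vt - {r}" and y: "y \<in> Vt - {r}" and eq: "{x, g x} = {y, g y}"
    have "?h (g x) < ?h x" "?h (g y) < ?h y"
      using g x y by auto
    with eq show "x = y"
      by (auto simp: doubleton_eq_iff)
  qed
  moreover have "(\<lambda>v. {v, g v}) ` (Vt - {r}) \<subseteq> Et"
    using g by auto
  moreover have "finite Et"
    using fin edges finite_subset[of Et "Pow Vt"] by auto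
  ultimately have "card (Vt - {r}) \<le> card Et"
    by (rule card_inj_on_le)
  then show ?thesis
    using fin r by simp
qed

lemma edge_is_bridge:
  assumes fin: "finite Vt" and edges: "\<forall>e\<in>Et. e \<subseteq> Vt" and r: "r \<in> Vt"
    and con: "\<forall>x\<in>Vt. reach Vt Et x r" and card: "card Et + 1 = card Vt" and xy: "{x, y} \<in> Et"
  shows "\<not> reach Vt (Et - {{x, y}}) x y"
proof
  assume xy_reach: "reach Vt (Et - {{x, y}}) x y"
  have edge_reach: "reach Vt (Et - {{x, y}}) a b" if "{a, b} \<in> Et" "a \<in> Vt" "b \<in> Vt" for a b
  proof (cases "{a, b} = {x, y}")
    case True
    then have "(a = x \<and> b = y) \<or> (a = y \<and> b = x)"
      by (auto simp: doubleton_eq_iff)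
    then show ?thesis
      using xy_reach reach_sym[OF xy_reach] by auto
  next
    case False
    then show ?thesis
      using that by (simp add: reach_edge)
  qed
  have "reach Vt (Et - {{x, y}}) v r" if v: "v \<in> Vt" for v
  proof -
    obtain q where "walk_betw Vt Et v r q"
      using con v unfolding reach_def by blast
    then show ?thesis
      using reach_if_edges_reach[of Vt Et q "Et - {{x, y}}", OF _ edge_reach]
      by (simp add: walk_betw_def)
  qed
  then have "card Vt \<le> card (Et - {{x, y}}) + 1"
    using fin edges r by (intro connected_card_le) blast+
  moreover have "finite Et"
    using fin edges finite_subset[of Et "Pow Vt"] by auto
  ultimately show False
    using card xy card_gt_0_iff[of Et] by (auto simp: card_Diff_singleton)
qed

lemma simple_walk_unique:
  assumes bridges: "\<And>x y. {x, y} \<in> F \<Longrightarrow> \<not> reach X (F - {{x, y}}) x y"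
    and p: "walk_betw X F a b p" "distinct p" and q: "walk_betw X F a b q" "distinct q"
  shows "p = q"
  using p q
proof (induction p arbitrary: a q)
  case (Cons x p')
  obtain q' where q': "q = x # q'"
    using Cons.prems by (cases q) (auto simp: walk_betw_def)
  consider "p' = []" "q' = []" | "p' \<noteq> []" "q' \<noteq> []" | "p' = [] \<longleftrightarrow> q' \<noteq> []"
    by blast
  then show ?case
  proof cases
    case 2
    then obtain y y' where y: "y = hd p'" "y' = hd q'" by blast
    show ?thesis
    proof (cases "y = y'")
      case True
      then have "p' = q'"
        using Cons 2 q' y by (intro Cons.IH[of y]) (auto simp: walk_betw_def walk_Cons)
      then show ?thesis
        using q' by simp
    next
      case False
      \<comment> \<open>x occurs only once in p and q, so neither p' nor q uses the edge {x, y}\<close>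
      have "walk X (F - {{x, y}}) p'" "walk X (F - {{x, y}}) q"
        using Cons 2 q' y False
        by (auto simp: walk_betw_def walk_Cons doubleton_eq_iff intro!: walk_remove_edge)
      then have "reach X (F - {{x, y}}) y b" "reach X (F - {{x, y}}) x b"
        using Cons 2 q' y unfolding reach_def walk_betw_def by (auto simp: last_ConsR)
      then have "reach X (F - {{x, y}}) x y"
        by (meson reach_sym reach_trans)
      moreover have "{x, y} \<in> F"
        using Cons 2 y by (auto simp: walk_betw_def walk_Cons)
      ultimately show ?thesis
        using bridges by blast
    qed
  next
    case 3
    have "x \<notin> set p'" "x \<notin> set q'" "last (x # p') = last (x # q')"
      using Cons.prems q' by (auto simp: walk_betw_def)
    with 3 show ?thesis
      by (metis last_ConsL last_ConsR last_in_set)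
  qed (use q' in simp)
qed (simp add: walk_betw_def)

lemma is_treeD:
  assumes "is_tree X E T"
  shows "finite (tverts T)" "\<forall>e\<in>tedges T. e \<subseteq> tverts T" "troot T \<in> tverts T"
    "\<forall>x\<in>tverts T. reach (tverts T) (tedges T) (troot T) x" "card (tedges T) + 1 = card (tverts T)"
    "tverts T \<subseteq> X" "tedges T \<subseteq> E"
  using assms unfolding is_tree_def by auto

lemma tpath_walk:
  assumes T: "is_tree X E T" and a: "a \<in> tverts T" and b: "b \<in> tverts T"
  shows "walk_betw (tverts T) (tedges T) a b (tpath T a b)" "distinct (tpath T a b)"
    and tpath_eqI: "walk_betw (tverts T) (tedges T) a b q \<Longrightarrow> distinct q \<Longrightarrow> tpath T a b = q"
proof -
  note tree = is_treeD[OF T]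
  have "\<forall>x\<in>tverts T. reach (tverts T) (tedges T) x (troot T)"
    using tree(4) by (simp add: reach_sym)
  note unique = simple_walk_unique[OF edge_is_bridge[OF tree(1,2,3) this tree(5)]]
  have "reach (tverts T) (tedges T) a b"
    using tree(4) a b by (meson reach_sym reach_trans)
  then obtain p where p: "walk_betw (tverts T) (tedges T) a b p" "distinct p"
    using reach_simple_walk by metis
  have "\<exists>!p. walk_betw (tverts T) (tedges T) a b p \<and> distinct p"
  proof (rule ex1I[of _ p])
    fix p' assume "walk_betw (tverts T) (tedges T) a b p' \<and> distinct p'"
    then show "p' = p"
      using unique p by blast
  qed (use p in blast)
  then have "walk_betw (tverts T) (tedges T) a b (tpath T a b) \<and> distinct (tpath T a b)"
    unfolding tpath_def by (rule theI')
  then show "walk_betw (tverts T) (tedges T) a b (tpath T a b)" "distinct (tpath T a b)"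
    by blast+
  then show "walk_betw (tverts T) (tedges T) a b q \<Longrightarrow> distinct q \<Longrightarrow> tpath T a b = q"
    using unique by blast
qed

lemma tpath_rev:
  "is_tree X E T \<Longrightarrow> a \<in> tverts T \<Longrightarrow> b \<in> tverts T \<Longrightarrow> tpath T b a = rev (tpath T a b)"
  by (simp add: tpath_walk tpath_eqI walk_betw_rev)

lemma tpath_prefix:
  assumes T: "is_tree X E T" and a: "a \<in> tverts T" and b: "b \<in> tverts T"
    and p: "tpath T a b = xs @ ys" and xs: "xs \<noteq> []"
  shows "tpath T a (last xs) = xs"
proof -
  have "walk_betw (tverts T) (tedges T) a (last xs) xs" "distinct xs"
    using tpath_walk[OF T a b] walk_betw_appendD(1) xs unfolding p by auto
  moreover from this have "last xs \<in> tverts T"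
    using xs last_in_set by (auto simp: walk_betw_def walk_def)
  ultimately show ?thesis
    using tpath_eqI[OF T a] by blast
qed

lemma tparent_on_root_path:
  assumes T: "is_tree X E T" and b: "b \<in> tverts T" and p: "tpath T (troot T) b = xs @ w # c # ys"
  shows "tparent T c = w" "c \<noteq> troot T"
proof -
  have r: "troot T \<in> tverts T"
    using is_treeD(3)[OF T] .
  have path: "tpath T (troot T) c = xs @ [w, c]"
    using tpath_prefix[OF T r b, of "xs @ [w, c]" ys] p by simp
  moreover have c: "c \<in> tverts T"
    using tpath_walk(1)[OF T r b] p by (auto simp: walk_betw_def walk_def)
  ultimately have "tpath T c (troot T) = c # w # rev xs"
    using tpath_rev[OF T r] by simp
  then show "tparent T c = w"
    by (simp add: tparent_def)
  have "hd (xs @ [w, c]) = troot T" "distinct (xs @ [w, c])"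
    using tpath_walk[OF T r c] path by (auto simp: walk_betw_def)
  then show "c \<noteq> troot T"
    by (cases xs) auto
qed

section \<open>Shortest paths\<close>

lemma wgraph_edge_subset:
  assumes "wgraph V E wt W" "e \<in> E"
  shows "e \<subseteq> V"
proof -
  have "\<forall>e\<in>E. \<exists>x y. e = {x, y} \<and> x \<noteq> y \<and> x \<in> V \<and> y \<in> V"
    using assms(1) unfolding wgraph_def by (elim conjE)
  then obtain x y where "e = {x, y}" "x \<in> V" "y \<in> V"
    using assms(2) by blast
  then show ?thesis
    by simp
qed

lemma wgraph_wt_ge_1:
  assumes "wgraph V E wt W"
  shows "\<forall>e\<in>E. 1 \<le> wt e"
proof -
  have "\<forall>e\<in>E. 1 \<le> wt e \<and> wt e \<le> W"
    using assms unfolding wgraph_def by (elim conjE)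
  then show ?thesis
    by simp
qed

lemma wgraph_wt_nonneg: "wgraph V E wt W \<Longrightarrow> \<forall>e\<in>E. 0 \<le> wt e"
  using wgraph_wt_ge_1 by fastforce

lemma wgraph_ex1_sp:
  assumes "wgraph V E wt W" "X \<subseteq> V" "reach X E x y"
  shows "\<exists>!p. is_sp X E wt x y p"
proof -
  have "\<forall>X F x y. X \<subseteq> V \<longrightarrow> F \<subseteq> E \<longrightarrow> reach X F x y \<longrightarrow> (\<exists>!p. is_sp X F wt x y p)"
    using assms(1) unfolding wgraph_def by (elim conjE)
  then show ?thesis
    using assms(2,3) by simp
qed

lemma is_sp_sp:
  "wgraph V E wt W \<Longrightarrow> X \<subseteq> V \<Longrightarrow> reach X E x y \<Longrightarrow> is_sp X E wt x y (sp X E wt x y)"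
  unfolding sp_def by (rule theI'[OF wgraph_ex1_sp])

lemma sp_eqI:
  assumes "wgraph V E wt W" "X \<subseteq> V" "is_sp X E wt x y q"
  shows "sp X E wt x y = q"
proof -
  have "reach X E x y"
    using assms(3) unfolding is_sp_def reach_def by blast
  with assms have "\<exists>!p. is_sp X E wt x y p"
    by (intro wgraph_ex1_sp)
  then show ?thesis
    unfolding sp_def using assms(3) by (rule the1_equality)
qed

lemma dist_le_wlen:
  assumes "\<forall>e\<in>F. 0 \<le> wt e" "walk_betw X F x y q"
  shows "dist X F wt x y \<le> wlen wt q"
  unfolding dist_def
proof (rule cInf_lower)
  show "wlen wt q \<in> {wlen wt q |q. walk_betw X F x y q}"
    using assms(2) by blast
  show "bdd_below {wlen wt q |q. walk_betw X F x y q}"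
    by (rule bdd_belowI[of _ 0]) (use assms(1) wlen_nonneg in \<open>auto simp: walk_betw_def\<close>)
qed

lemma is_sp_subpath:
  assumes sp: "is_sp X F wt x y P" and ij: "i \<le> j" "j < length P"
  shows "is_sp X F wt (P ! i) (P ! j) (subpath P i j)"
  unfolding is_sp_def
proof (intro conjI allI impI)
  have P: "walk X F P" "hd P = x" "last P = y"
    using sp by (auto simp: is_sp_def walk_betw_def)
  show "walk_betw X F (P ! i) (P ! j) (subpath P i j)"
    using walk_betw_subpath[OF P(1) ij] .
  fix q assume q: "walk_betw X F (P ! i) (P ! j) q"
  define A where "A = subpath P 0 i"
  define B where "B = subpath P j (length P - 1)"
  have A: "walk_betw X F x (P ! i) A" and B: "walk_betw X F (P ! j) y B"
    using P ij walk_betw_subpath[OF P(1)] unfolding A_def B_def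
    by (auto simp: hd_conv_nth last_conv_nth walk_not_Nil)
  have "wlen wt P \<le> wlen wt (pcat (pcat A q) B)"
    using sp walk_betw_pcat[OF walk_betw_pcat[OF A q] B] by (simp add: is_sp_def)
  also have "\<dots> = wlen wt (take (Suc i) P) + wlen wt q + wlen wt (drop j P)"
    using ij unfolding wlen_walk_betw_pcat[OF walk_betw_pcat[OF A q] B] wlen_walk_betw_pcat[OF A q]
    by (simp add: A_def B_def subpath_def)
  finally show "wlen wt (subpath P i j) \<le> wlen wt q"
    using wlen_split3[OF ij, of wt] by simp
qed

lemma is_sp_subpath_pcat:
  assumes p: "is_sp X F wt u v p" and q: "is_sp X F wt v w q"
    and ij: "i \<le> j" "j < length (pcat p q)" "j < length p \<or> length p - 1 \<le> i"
  shows "is_sp X F wt (pcat p q ! i) (pcat p q ! j) (subpath (pcat p q) i j)"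
proof -
  have ne: "p \<noteq> []" "q \<noteq> []" and pq: "last p = hd q"
    using p q by (auto simp: is_sp_def walk_betw_def walk_not_Nil)
  then have len: "length (pcat p q) = length p + length q - 1"
    by (cases q) (auto simp: pcat_def)
  from ij(3) show ?thesis
  proof
    assume "j < length p"
    then show ?thesis
      using is_sp_subpath[OF p ij(1)] ij by (simp add: nth_pcat_left subpath_pcat_left)
  next
    assume i: "length p - 1 \<le> i"
    have "j - (length p - 1) < length q"
      using ij len ne by auto
    then show ?thesis
      using is_sp_subpath[OF q, of "i - (length p - 1)" "j - (length p - 1)"] ij i ne pq
      by (simp add: nth_pcat_right subpath_pcat_right)
  qed
qed

lemma pcat_is_sp_split:
  assumes p: "is_sp X F wt u v p" and q: "is_sp X F wt v w q"
    and ij: "i \<le> j" "j < length (pcat p q)"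
  obtains m where "i \<le> m" "m \<le> j"
    "is_sp X F wt (pcat p q ! i) (pcat p q ! m) (subpath (pcat p q) i m)"
    "is_sp X F wt (pcat p q ! m) (pcat p q ! j) (subpath (pcat p q) m j)"
proof -
  define m where "m = max i (min (length p - 1) j)"
  have "p \<noteq> []"
    using p by (auto simp: is_sp_def walk_betw_def walk_not_Nil)
  then have "i \<le> m" "m \<le> j" "m < length p \<or> length p - 1 \<le> i" "j < length p \<or> length p - 1 \<le> m"
    using ij unfolding m_def by auto
  with ij show ?thesis
    using that is_sp_subpath_pcat[OF p q] by simp
qed

section \<open>Segments\<close>

abbreviation end_dist :: "('a set \<Rightarrow> real) \<Rightarrow> 'a list \<Rightarrow> nat \<Rightarrow> real" where
  "end_dist wt P j \<equiv> min (wlen wt (take (Suc j) P)) (wlen wt (drop j P))"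

lemma floor_log_eq_imp_close:
  fixes B x y :: real
  assumes B: "B > 1" and x: "0 < x" "x \<le> y" and eq: "\<lfloor>log B x\<rfloor> = \<lfloor>log B y\<rfloor>"
  shows "y - x < (B - 1) * x"
proof -
  define t where "t = real_of_int \<lfloor>log B x\<rfloor>"
  have "B powr t \<le> B powr (log B x)"
    using B unfolding t_def by (intro powr_mono) auto
  then have lower: "B powr t \<le> x"
    using B x by simp
  have "log B y < t + 1"
    unfolding t_def eq by linarith
  then have "B powr (log B y) < B powr (t + 1)"
    using B by (intro powr_less_mono) auto
  then have "y < B * B powr t"
    using B x by (simp add: powr_add mult.commute)
  then have "y - x < (B - 1) * B powr t"
    using lower by (simp add: algebra_simps)
  also have "\<dots> \<le> (B - 1) * x"
    using lower B by (intro mult_left_mono) auto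
  finally show ?thesis .
qed

lemma segment_subset:
  assumes "C \<in> segments wt \<eta> P"
  shows "C \<subseteq> {1..<length P - 1}" "C \<noteq> {}"
proof -
  obtain i0 where "1 \<le> i0" "i0 < length P - 1" "C = {j. same_seg wt \<eta> P i0 j}"
    using assms unfolding segments_def by blast
  moreover have "wlen wt (take (Suc i0) P) + wlen wt (drop i0 P) = wlen wt P"
    using calculation by (intro wlen_take_Suc_add_drop) auto
  ultimately show "C \<subseteq> {1..<length P - 1}" "C \<noteq> {}"
    unfolding same_seg_def by auto
qed

lemma segment_cases:
  assumes "C \<in> segments wt \<eta> P"
  shows "(\<forall>i\<in>C. \<forall>j\<in>C. wlen wt (take (Suc i) P) \<le> wlen wt P / 2 \<and>
        \<lfloor>log (1 + \<eta>) (wlen wt (take (Suc i) P))\<rfloor> = \<lfloor>log (1 + \<eta>) (wlen wt (take (Suc j) P))\<rfloor>) \<or>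
     (\<forall>i\<in>C. \<forall>j\<in>C. wlen wt (drop i P) < wlen wt P / 2 \<and>
        \<lfloor>log (1 + \<eta>) (wlen wt (drop i P))\<rfloor> = \<lfloor>log (1 + \<eta>) (wlen wt (drop j P))\<rfloor>)"
proof -
  obtain i0 where i0: "1 \<le> i0" "i0 < length P - 1" and C_eq: "C = {j. same_seg wt \<eta> P i0 j}"
    using assms unfolding segments_def by blast
  have "wlen wt (take (Suc i0) P) + wlen wt (drop i0 P) = wlen wt P"
    using i0 by (intro wlen_take_Suc_add_drop) auto
  then show ?thesis
    unfolding C_eq same_seg_def by (cases "wlen wt (take (Suc i0) P) \<le> wlen wt P / 2") auto
qed

lemma log_class_short_prefix:
  fixes pre suf :: "nat \<Rightarrow> real"
  assumes \<eta>: "0 < \<eta>" and ab: "a \<in> C" "b \<in> C" "a \<le> b" and pos: "0 < pre a"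
    and mono: "\<And>j. a \<le> j \<Longrightarrow> j \<le> b \<Longrightarrow> pre a \<le> pre j \<and> pre j \<le> pre b"
    and tot: "\<And>j. a \<le> j \<Longrightarrow> j \<le> b \<Longrightarrow> pre j + suf j = tot"
    and same_class: "\<forall>i\<in>C. \<forall>j\<in>C. pre i \<le> tot / 2 \<and> \<lfloor>log (1 + \<eta>) (pre i)\<rfloor> = \<lfloor>log (1 + \<eta>) (pre j)\<rfloor>"
  shows "\<exists>L. pre b - pre a < \<eta> * L \<and> (\<forall>j. a \<le> j \<and> j \<le> b \<longrightarrow> L \<le> min (pre j) (suf j))"
proof -
  have half: "pre b \<le> tot / 2" and eq: "\<lfloor>log (1 + \<eta>) (pre a)\<rfloor> = \<lfloor>log (1 + \<eta>) (pre b)\<rfloor>"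
    using same_class ab by blast+
  have "pre b - pre a < \<eta> * pre a"
    using floor_log_eq_imp_close[of "1 + \<eta>" "pre a" "pre b"] \<eta> pos mono[OF ab(3) order_refl] eq by simp
  moreover have "pre a \<le> min (pre j) (suf j)" if "a \<le> j" "j \<le> b" for j
    using mono[OF that] mono[OF ab(3) order_refl] tot[OF that] half by linarith
  ultimately show ?thesis
    by blast
qed

lemma log_class_short_suffix:
  fixes pre suf :: "nat \<Rightarrow> real"
  assumes \<eta>: "0 < \<eta>" and ab: "a \<in> C" "b \<in> C" "a \<le> b" and pos: "0 < suf b"
    and mono: "\<And>j. a \<le> j \<Longrightarrow> j \<le> b \<Longrightarrow> pre a \<le> pre j \<and> pre j \<le> pre b"
    and tot: "\<And>j. a \<le> j \<Longrightarrow> j \<le> b \<Longrightarrow> pre j + suf j = tot"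
    and same_class: "\<forall>i\<in>C. \<forall>j\<in>C. suf i < tot / 2 \<and> \<lfloor>log (1 + \<eta>) (suf i)\<rfloor> = \<lfloor>log (1 + \<eta>) (suf j)\<rfloor>"
  shows "\<exists>L. pre b - pre a < \<eta> * L \<and> (\<forall>j. a \<le> j \<and> j \<le> b \<longrightarrow> L \<le> min (pre j) (suf j))"
proof -
  have half: "suf a < tot / 2" and eq: "\<lfloor>log (1 + \<eta>) (suf b)\<rfloor> = \<lfloor>log (1 + \<eta>) (suf a)\<rfloor>"
    using same_class ab by blast+
  have sums: "pre a + suf a = tot" "pre b + suf b = tot"
    using tot ab(3) by auto
  moreover have "suf b \<le> suf a"
    using mono[OF ab(3) order_refl] sums by linarith
  ultimately have "pre b - pre a < \<eta> * suf b"
    using floor_log_eq_imp_close[of "1 + \<eta>" "suf b" "suf a"] \<eta> pos eq by simp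
  moreover have "suf b \<le> min (pre j) (suf j)" if "a \<le> j" "j \<le> b" for j
    using mono[OF that] tot[OF that] sums half by linarith
  ultimately show ?thesis
    by blast
qed

lemma segment_short:
  assumes P: "walk X F P" "\<forall>e\<in>F. 1 \<le> wt e" and \<eta>: "\<eta> > 0" and C: "C \<in> segments wt \<eta> P"
  shows "1 \<le> Min C" "Min C \<le> Max C" "Max C < length P - 1"
    and "\<exists>L. wlen wt (subpath P (Min C) (Max C)) < \<eta> * L \<and>
      (\<forall>j. Min C \<le> j \<and> j \<le> Max C \<longrightarrow> L \<le> end_dist wt P j)"
proof -
  define a b where "a = Min C" and "b = Max C"
  define pre suf where "pre j = wlen wt (take (Suc j) P)" and "suf j = wlen wt (drop j P)" for j
  define tot where "tot = wlen wt P"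
  note C_subset = segment_subset[OF C]
  have "finite C"
    using C_subset(1) finite_subset by blast
  then have ab: "a \<in> C" "b \<in> C" "a \<le> b"
    using C_subset(2) unfolding a_def b_def by auto
  then show "1 \<le> Min C" "Min C \<le> Max C" "Max C < length P - 1"
    using C_subset(1) unfolding a_def b_def by auto
  then have range: "1 \<le> a" "b < length P - 1"
    unfolding a_def b_def by auto
  have mono: "pre a \<le> pre j \<and> pre j \<le> pre b" if "a \<le> j" "j \<le> b" for j
    using wlen_take_Suc_mono[OF P, of a j] wlen_take_Suc_mono[OF P, of j b] that range
    unfolding pre_def by auto
  have tot: "pre j + suf j = tot" if "a \<le> j" "j \<le> b" for j
    using wlen_take_Suc_add_drop[of j P wt] that range unfolding pre_def suf_def tot_def by simp
  have "real a \<le> pre a" "real (length P - 1 - b) \<le> suf b"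
    using wlen_take_Suc_ge[OF P, of a] wlen_drop_ge[OF P, of b] range ab(3) unfolding pre_def suf_def
    by auto
  then have pos: "0 < pre a" "0 < suf b"
    using range by auto
  have "\<exists>L. pre b - pre a < \<eta> * L \<and> (\<forall>j. a \<le> j \<and> j \<le> b \<longrightarrow> L \<le> min (pre j) (suf j))"
    using segment_cases[OF C, folded pre_def suf_def tot_def]
      log_class_short_prefix[OF \<eta> ab pos(1) mono tot] log_class_short_suffix[OF \<eta> ab pos(2) mono tot]
    by blast
  moreover have "wlen wt (subpath P a b) = pre b - pre a"
    using wlen_subpath_eq_diff[of a b P wt] range ab(3) unfolding pre_def by simp
  ultimately show "\<exists>L. wlen wt (subpath P (Min C) (Max C)) < \<eta> * L \<and>
      (\<forall>j. Min C \<le> j \<and> j \<le> Max C \<longrightarrow> L \<le> end_dist wt P j)"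
    unfolding pre_def suf_def a_def b_def by simp
qed

section \<open>Levels of the hierarchy\<close>

lemma level_spec:
  assumes hp: "hpath V TC s d U p" and v: "v \<in> V"
  shows "1 \<le> level U p v" "level U p v \<le> p" "v \<in> U (level U p v)"
proof -
  have start: "1 \<le> p" "U 1 = V"
    using hp unfolding hpath_def by auto
  have "1 \<le> level U p v \<and> level U p v \<le> p \<and> v \<in> U (level U p v)"
    unfolding level_def by (rule GreatestI_nat[of _ 1 p]) (use v start in auto)
  then show "1 \<le> level U p v" "level U p v \<le> p" "v \<in> U (level U p v)"
    by auto
qed

lemma not_in_U_Suc:
  assumes hp: "hpath V TC s d U p" and v: "v \<in> V" and j: "level U p v \<le> j" "j \<le> p"
  shows "v \<notin> U (Suc j)"
proof
  assume vU: "v \<in> U (Suc j)"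
  show False
  proof (cases "j = p")
    case True
    then show False
      using vU hp by (simp add: hpath_def)
  next
    case False
    have "Suc j \<le> level U p v"
      unfolding level_def by (rule Greatest_le_nat[of _ "Suc j" p]) (use vU j False in auto)
    then show False
      using j by simp
  qed
qed

lemma Lev_subset:
  assumes "hpath V TC s d U p" "j \<le> p"
  shows "Lev V U p j \<subseteq> V - U (Suc j)"
  using not_in_U_Suc[OF assms(1) _ _ assms(2)] unfolding Lev_def by blast

lemma ex_max_level:
  assumes "finite S" "S \<noteq> {}" "S \<subseteq> V"
  obtains z where "z \<in> S" "S \<subseteq> Lev V U p (level U p z)"
proof -
  have "Max (level U p ` S) \<in> level U p ` S"
    using assms by simp
  then obtain z where z: "z \<in> S" "level U p z = Max (level U p ` S)"
    by auto
  then have "\<forall>x\<in>S. level U p x \<le> level U p z"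
    using assms(1) by simp
  then show thesis
    using z(1) assms(3) by (intro that[of z]) (auto simp: Lev_def)
qed

lemma fixed_covers_tree_cover:
  "fixed_covers V E wt TC \<Longrightarrow> R \<subseteq> V \<Longrightarrow> S \<subseteq> V \<Longrightarrow> tree_cover V E wt R (S - R) (TC R S)"
  unfolding fixed_covers_def by blast

lemma tree_cover_tree:
  "tree_cover V E wt R S C \<Longrightarrow> x \<in> S \<Longrightarrow> is_tree (V - R) E (C x) \<and> troot (C x) = x"
  unfolding tree_cover_def by blast

lemma tree_cover_stretch:
  assumes "tree_cover V E wt R S C" "u \<in> S" "v \<in> V - R" "reach (V - R) E u v"
  obtains x where "x \<in> S" "u \<in> tverts (C x)" "v \<in> tverts (C x)"
    "dep wt (C x) u + dep wt (C x) v \<le> (2 * kk V - 1) * dist (V - R) E wt u v"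
  using assms unfolding tree_cover_def by blast

lemma Wseq_subset:
  assumes G: "wgraph V E wt W" and covers: "fixed_covers V E wt TC" and s: "0 \<le> s" and UV: "S \<subseteq> V"
  shows "Wseq TC s S j \<subseteq> V"
proof (induction j)
  case (Suc j)
  let ?W = "Wseq TC s S j"
  have "v \<in> V" if v: "v \<in> Hi TC s ?W S" for v
  proof -
    obtain x where x: "x \<in> S - ?W" and pd: "s < real (pdeg (TC ?W S x) (S - ?W) v)"
      using v unfolding Hi_def by auto
    then have "pdeg (TC ?W S x) (S - ?W) v \<noteq> 0"
      using s by auto
    then have "card {e \<in> tedges (TC ?W S x). v \<in> e \<and> e \<subseteq> trunk (TC ?W S x) (S - ?W)} \<noteq> 0"
      unfolding pdeg_def by presburger
    then have "{e \<in> tedges (TC ?W S x). v \<in> e \<and> e \<subseteq> trunk (TC ?W S x) (S - ?W)} \<noteq> {}"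
      by (metis card.empty)
    then obtain e where e: "e \<in> tedges (TC ?W S x)" "v \<in> e"
      by blast
    have "is_tree (V - ?W) E (TC ?W S x)"
      using tree_cover_tree[OF fixed_covers_tree_cover[OF covers Suc.IH UV] x] by blast
    then have "e \<in> E"
      using e is_treeD(7) by blast
    then show "v \<in> V"
      using wgraph_edge_subset[OF G] e by blast
  qed
  then show ?case
    using Suc.IH by auto
qed simp

lemma hpath_U_subset:
  assumes G: "wgraph V E wt W" and covers: "fixed_covers V E wt TC" and hp: "hpath V TC s d U p"
    and s: "0 \<le> s" and i: "1 \<le> i" "i \<le> Suc p"
  shows "U i \<subseteq> V"
  using i
proof (induction i)
  case (Suc i)
  consider "i = 0" | "1 \<le> i" "i < p" | "i = p"
    using Suc.prems by linarith
  then show ?case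
  proof cases
    case 2
    then obtain j where "U (Suc i) = Wseq TC s (U i) j"
      using hp unfolding hpath_def hchild_def by blast
    then show ?thesis
      using Wseq_subset[OF G covers s] Suc 2 by simp
  qed (use hp in \<open>auto simp: hpath_def\<close>)
qed simp

section \<open>Detours to the neighbours of failed vertices\<close>

lemma walk_betw_prefix:
  assumes p: "walk_betw X F x y p" and z: "z \<in> set p" and nonneg: "\<forall>e\<in>F. 0 \<le> wt e"
  obtains q where "walk_betw X F x z q" "wlen wt q \<le> wlen wt p"
proof -
  obtain ys zs where p_eq: "p = (ys @ [z]) @ zs"
    using split_list[OF z] by auto
  show thesis
  proof (rule that)
    show "walk_betw X F x z (ys @ [z])"
      using walk_betw_appendD(1)[of X F x y "ys @ [z]" zs] p p_eq by simp
    show "wlen wt (ys @ [z]) \<le> wlen wt p"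
      using wlen_append_ge(1)[of X F "ys @ [z]" zs wt] p nonneg unfolding p_eq walk_betw_def by simp
  qed
qed

text \<open>A walk that beats Q inside Z must pass through D, since Q is shortest outside D.\<close>
lemma short_walk_to_D_if_not_sp:
  assumes Q: "is_sp (X - D) F wt x y Q" and nonneg: "\<forall>e\<in>F. 0 \<le> wt e"
    and Z: "Z \<subseteq> X" "set Q \<subseteq> Z" and not_sp: "\<not> is_sp Z F wt x y Q" and z: "z \<in> set Q"
  obtains f q where "f \<in> D" "walk_betw Z F z f q" "wlen wt q < 2 * wlen wt Q"
proof -
  have QZ: "walk_betw Z F x y Q"
    using Q Z(2) walk_mono[of "X - D" F Q Z F] by (auto simp: is_sp_def walk_betw_def)
  then obtain S where S: "walk_betw Z F x y S" "wlen wt S < wlen wt Q"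
    using not_sp unfolding is_sp_def by force
  obtain f where f: "f \<in> set S" "f \<in> D"
  proof (rule ccontr)
    assume "\<not> thesis"
    then have "set S \<subseteq> X - D"
      using that S Z(1) by (auto simp: walk_betw_def walk_def)
    then have "walk_betw (X - D) F x y S"
      using S walk_mono[of Z F S "X - D" F] by (auto simp: walk_betw_def)
    then show False
      using Q S(2) unfolding is_sp_def by fastforce
  qed
  obtain q1 where q1: "walk_betw Z F x z q1" "wlen wt q1 \<le> wlen wt Q"
    using walk_betw_prefix[OF QZ z nonneg] .
  obtain q2 where q2: "walk_betw Z F x f q2" "wlen wt q2 \<le> wlen wt S"
    using walk_betw_prefix[OF S(1) f(1) nonneg] .
  have "walk_betw Z F z f (pcat (rev q1) q2)"
    using walk_betw_pcat[OF walk_betw_rev[OF q1(1)] q2(1)] .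
  moreover have "wlen wt (pcat (rev q1) q2) < 2 * wlen wt Q"
    using q1 q2 S(2) wlen_walk_betw_pcat[OF walk_betw_rev[OF q1(1)] q2(1)] by (simp add: wlen_rev)
  ultimately show thesis
    using that f(2) by blast
qed

lemma tree_walk_to_child_of_D:
  assumes T: "is_tree X E T" and nonneg: "\<forall>e\<in>tedges T. 0 \<le> wt e"
    and S: "troot T \<in> S" "z \<in> S" and z: "z \<in> tverts T" "z \<notin> D"
    and meets: "\<exists>y\<in>set (tpath T (troot T) z). y \<in> D"
  obtains f' w q where "f' \<in> D" "f' \<in> tverts T" "w \<in> NT T S f'" "w \<notin> D"
    "walk_betw (tverts T - D) (tedges T) z w q" "wlen wt q \<le> dep wt T z"
proof -
  define r where "r = troot T"
  have r: "r \<in> tverts T"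
    using is_treeD(3)[OF T] r_def by simp
  define pz where "pz = tpath T r z"
  have pz: "walk_betw (tverts T) (tedges T) r z pz"
    using tpath_walk(1)[OF T r z(1)] pz_def by simp
  obtain ys f' zs where pz_eq: "pz = ys @ f' # zs" and f': "f' \<in> D" and zs: "\<forall>y\<in>set zs. y \<notin> D"
    using split_list_last_prop[of pz "\<lambda>y. y \<in> D"] meets unfolding pz_def r_def by blast
  then obtain w zs' where zs_eq: "zs = w # zs'"
    using pz z(2) by (cases zs) (auto simp: walk_betw_def)
  \<comment> \<open>w follows the last failed vertex f' on the tree path from the root to z\<close>
  have "tparent T w = f'" "w \<noteq> troot T"
    using tparent_on_root_path[OF T z(1)] pz_eq zs_eq unfolding pz_def r_def by simp_all
  moreover have f'T: "f' \<in> tverts T" and "w \<in> tverts T"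
    using pz unfolding pz_eq zs_eq walk_betw_def walk_def by auto
  moreover have "w \<in> trunk T S"
  proof -
    have "w \<in> set (tpath T z r)"
      unfolding tpath_rev[OF T r z(1)] pz_def[symmetric] pz_eq zs_eq by simp
    then show ?thesis
      unfolding trunk_def using S z(1) r r_def by blast
  qed
  ultimately have NT: "w \<in> NT T S f'"
    unfolding NT_def tchildren_def by simp
  have suffix: "walk_betw (tverts T) (tedges T) w z (w # zs')"
    using walk_betw_appendD(2)[of _ _ r z "ys @ [f']" "w # zs'"] pz unfolding pz_eq zs_eq by simp
  have "walk_betw (tverts T - D) (tedges T) z w (rev (w # zs'))"
    using walk_betw_Diff[OF walk_betw_rev[OF suffix]] zs zs_eq by simp
  moreover have "wlen wt (rev (w # zs')) \<le> dep wt T z"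
    using wlen_append_ge(2)[of "tverts T" "tedges T" "ys @ [f']" "w # zs'" wt, OF _ nonneg] pz
    unfolding wlen_rev dep_def r_def[symmetric] pz_def[symmetric] pz_eq zs_eq walk_betw_def by simp
  ultimately show thesis
    using that f' f'T NT zs zs_eq by simp
qed

lemma tree_walk_to_parent_of_D:
  assumes T: "is_tree X E T" and nonneg: "\<forall>e\<in>tedges T. 0 \<le> wt e"
    and z: "z \<in> tverts T" and avoids: "\<forall>y\<in>set (tpath T (troot T) z). y \<notin> D"
    and f: "f \<in> D" "f \<in> tverts T"
  obtains f' w q where "f' \<in> D" "f' \<in> tverts T" "w \<in> NT T S f'" "w \<notin> D"
    "walk_betw (tverts T - D) (tedges T) z w q" "wlen wt q \<le> dep wt T z + dep wt T f"
proof -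
  define r where "r = troot T"
  have r: "r \<in> tverts T"
    using is_treeD(3)[OF T] r_def by simp
  define pz pf where "pz = tpath T r z" and "pf = tpath T r f"
  have pz: "walk_betw (tverts T) (tedges T) r z pz" and pf: "walk_betw (tverts T) (tedges T) r f pf"
    using tpath_walk(1)[OF T r z] tpath_walk(1)[OF T r f(2)] pz_def pf_def by simp_all
  have "r \<notin> D"
    using avoids pz hd_in_set unfolding pz_def r_def walk_betw_def by (metis walk_Nil)
  have "\<exists>y\<in>set pf. y \<in> D"
    using pf f(1) last_in_set unfolding walk_betw_def by (metis walk_Nil)
  then obtain ys f' zs where pf_eq: "pf = ys @ f' # zs" and f': "f' \<in> D" and ys: "\<forall>y\<in>set ys. y \<notin> D"
    using split_list_first_prop[of pf "\<lambda>y. y \<in> D"] by blast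
  moreover have "hd pf = r"
    using pf by (simp add: walk_betw_def)
  ultimately obtain ys' w where ys_eq: "ys = ys' @ [w]"
    using \<open>r \<notin> D\<close> by (cases ys rule: rev_exhaust) auto
  \<comment> \<open>f' is the first failed vertex on the tree path from the root to f, and w is its parent\<close>
  have "tparent T f' = w" "f' \<noteq> troot T"
    using tparent_on_root_path[OF T f(2)] pf_eq ys_eq unfolding pf_def r_def by simp_all
  then have NT: "w \<in> NT T S f'"
    unfolding NT_def by simp
  have f'T: "f' \<in> tverts T"
    using pf unfolding pf_eq walk_betw_def walk_def by auto
  have prefix: "walk_betw (tverts T) (tedges T) r w ys"
    using walk_betw_appendD(1)[of _ _ r f ys "f' # zs"] pf unfolding pf_eq ys_eq by simp
  have "walk_betw (tverts T - D) (tedges T) z r (rev pz)"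
    using walk_betw_Diff[OF walk_betw_rev[OF pz]] avoids unfolding pz_def r_def by simp
  moreover have "walk_betw (tverts T - D) (tedges T) r w ys"
    using walk_betw_Diff[OF prefix] ys by simp
  ultimately have walk: "walk_betw (tverts T - D) (tedges T) z w (pcat (rev pz) ys)"
    by (rule walk_betw_pcat)
  have "wlen wt (pcat (rev pz) ys) = wlen wt pz + wlen wt ys"
    using wlen_walk_betw_pcat[OF walk_betw_rev[OF pz] prefix] by (simp add: wlen_rev)
  also have "\<dots> \<le> dep wt T z + dep wt T f"
    using wlen_append_ge(1)[of "tverts T" "tedges T" ys "f' # zs" wt, OF _ nonneg] pf
    unfolding dep_def r_def[symmetric] pz_def[symmetric] pf_def[symmetric] pf_eq walk_betw_def by simp
  finally show thesis
    using that f' f'T NT walk ys ys_eq by simp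
qed

lemma tree_walk_to_neighbour_of_D:
  assumes T: "is_tree X E T" and nonneg: "\<forall>e\<in>tedges T. 0 \<le> wt e"
    and S: "troot T \<in> S" "z \<in> S" and z: "z \<in> tverts T" "z \<notin> D" and f: "f \<in> D" "f \<in> tverts T"
  obtains f' w q where "f' \<in> D" "f' \<in> tverts T" "w \<in> NT T S f'" "w \<notin> D"
    "walk_betw (tverts T - D) (tedges T) z w q" "wlen wt q \<le> dep wt T z + dep wt T f"
proof (cases "\<exists>y\<in>set (tpath T (troot T) z). y \<in> D")
  case True
  obtain f' w q where "f' \<in> D" "f' \<in> tverts T" "w \<in> NT T S f'" "w \<notin> D"
    "walk_betw (tverts T - D) (tedges T) z w q" "wlen wt q \<le> dep wt T z"
    by (rule tree_walk_to_child_of_D[OF T nonneg S z True])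
  moreover have "0 \<le> dep wt T f"
    using tpath_walk(1)[OF T is_treeD(3)[OF T] f(2)] nonneg
    unfolding dep_def walk_betw_def by (blast intro: wlen_nonneg)
  ultimately show thesis
    by (intro that[of f' w q]) auto
next
  case False
  with tree_walk_to_parent_of_D[OF T nonneg z(1) _ f] that show thesis
    by blast
qed

lemma NT_in_VH:
  assumes "(i, x) \<in> tidx U p" "f \<in> D" "f \<in> tverts (TC (U (Suc i)) (U i) x)"
    and "w \<in> NT (TC (U (Suc i)) (U i) x) (U i - U (Suc i)) f" "w \<notin> D"
  shows "w \<in> VH TC U p D s0 t0"
  using assms unfolding VH_def Nf_def by blast

lemma detour_to_VH:
  assumes G: "wgraph V E wt W" and covers: "fixed_covers V E wt TC" and hp: "hpath V TC s d U p"
    and s: "0 \<le> s" and i: "1 \<le> i" "i \<le> p"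
    and z: "z \<in> U i - U (Suc i)" "z \<notin> D" and f: "f \<in> D" "f \<in> V - U (Suc i)"
    and zf: "reach (V - U (Suc i)) E z f"
  obtains w where "w \<in> VH TC U p D s0 t0" "reach (V - D) E z w"
    "dist (V - D) E wt z w \<le> (2 * kk V - 1) * dist (V - U (Suc i)) E wt z f"
proof -
  define R where "R = U (Suc i)"
  have "R \<subseteq> V" "U i \<subseteq> V"
    using hpath_U_subset[OF G covers hp s] i unfolding R_def by auto
  then have cover: "tree_cover V E wt R (U i - R) (TC R (U i))"
    by (rule fixed_covers_tree_cover[OF covers])
  have "z \<in> U i - R" "f \<in> V - R" "reach (V - R) E z f"
    using z f zf unfolding R_def by auto
  then obtain x where x: "x \<in> U i - R" "z \<in> tverts (TC R (U i) x)" "f \<in> tverts (TC R (U i) x)"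
    and stretch: "dep wt (TC R (U i) x) z + dep wt (TC R (U i) x) f \<le> (2 * kk V - 1) * dist (V - R) E wt z f"
    by (rule tree_cover_stretch[OF cover])
  define T where "T = TC R (U i) x"
  have T: "is_tree (V - R) E T" "troot T = x"
    using tree_cover_tree[OF cover x(1)] unfolding T_def by auto
  have nonneg: "\<forall>e\<in>tedges T. 0 \<le> wt e"
    using is_treeD(7)[OF T(1)] wgraph_wt_nonneg[OF G] by auto
  have "troot T \<in> U i - R" "z \<in> U i - R" "z \<in> tverts T" "f \<in> tverts T"
    using T(2) x z unfolding T_def R_def by auto
  then obtain f' w q where f': "f' \<in> D" "f' \<in> tverts T" and w: "w \<in> NT T (U i - R) f'" "w \<notin> D"
    and q: "walk_betw (tverts T - D) (tedges T) z w q" "wlen wt q \<le> dep wt T z + dep wt T f"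
    by (rule tree_walk_to_neighbour_of_D[OF T(1) nonneg _ _ _ z(2) f(1)])
  have "(i, x) \<in> tidx U p"
    using i x(1) unfolding tidx_def R_def by auto
  then have "w \<in> VH TC U p D s0 t0"
    by (rule NT_in_VH) (use f' w in \<open>simp_all add: T_def R_def\<close>)
  moreover have qw: "walk_betw (V - D) E z w q"
    using q(1) is_treeD(6,7)[OF T(1)] walk_mono[of "tverts T - D" "tedges T" q "V - D" E]
    by (auto simp: walk_betw_def walk_def)
  then have "reach (V - D) E z w"
    unfolding reach_def by blast
  moreover have "dist (V - D) E wt z w \<le> wlen wt q"
    using dist_le_wlen[OF wgraph_wt_nonneg[OF G] qw] .
  then have "dist (V - D) E wt z w \<le> (2 * kk V - 1) * dist (V - U (Suc i)) E wt z f"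
    using q(2) stretch unfolding T_def R_def by linarith
  ultimately show thesis
    by (rule that)
qed

section \<open>Segments of far-away paths\<close>

lemma far_awayD:
  assumes "far_away V E wt D H \<eta> P" "0 < j" "j < length P - 1" "y \<in> H" "reach (V - D) E (P ! j) y"
  shows "\<eta> * end_dist wt P j < dist (V - D) E wt (P ! j) y"
  using assms unfolding far_away_def by force

lemma not_level_sp_close_to_VH:
  assumes G: "wgraph V E wt W" and covers: "fixed_covers V E wt TC" and hp: "hpath V TC s d U p"
    and s: "0 \<le> s" and k: "2 * kk V - 1 > 0"
    and Q: "is_sp (V - D) E wt x y Q" and z: "z \<in> set Q" and Q_Lev: "set Q \<subseteq> Lev V U p (level U p z)"
    and not_sp: "\<not> is_sp (Lev V U p (level U p z)) E wt x y Q"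
  obtains w where "w \<in> VH TC U p D s0 t0" "reach (V - D) E z w"
    "dist (V - D) E wt z w < (4 * kk V - 2) * wlen wt Q"
proof -
  define i where "i = level U p z"
  have zV: "z \<in> V" "z \<notin> D"
    using Q z unfolding is_sp_def walk_betw_def walk_def by auto
  have i: "1 \<le> i" "i \<le> p"
    using level_spec(1,2)[OF hp zV(1)] unfolding i_def by simp_all
  have zU: "z \<in> U i - U (Suc i)"
    using level_spec(3)[OF hp zV(1)] not_in_U_Suc[OF hp zV(1) _ i(2)] unfolding i_def by simp
  have Lev: "Lev V U p i \<subseteq> V" "Lev V U p i \<subseteq> V - U (Suc i)"
    using Lev_subset[OF hp i(2)] unfolding Lev_def by auto
  obtain f q where f: "f \<in> D" and q: "walk_betw (Lev V U p i) E z f q" "wlen wt q < 2 * wlen wt Q"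
    using short_walk_to_D_if_not_sp[OF Q wgraph_wt_nonneg[OF G] Lev(1) _ _ z] Q_Lev not_sp
    unfolding i_def by blast
  have q': "walk_betw (V - U (Suc i)) E z f q"
    using q(1) Lev(2) walk_mono[of "Lev V U p i" E q "V - U (Suc i)" E] by (auto simp: walk_betw_def walk_def)
  then have "f \<in> V - U (Suc i)" "reach (V - U (Suc i)) E z f"
    using last_in_set[of q] unfolding reach_def walk_betw_def walk_def by auto
  then obtain w where w: "w \<in> VH TC U p D s0 t0" "reach (V - D) E z w"
    and dw: "dist (V - D) E wt z w \<le> (2 * kk V - 1) * dist (V - U (Suc i)) E wt z f"
    using detour_to_VH[OF G covers hp s i zU zV(2) f] by blast
  note dw
  also have "\<dots> \<le> (2 * kk V - 1) * wlen wt q"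
    using dist_le_wlen[OF wgraph_wt_nonneg[OF G] q'] k by (intro mult_left_mono) auto
  also have "\<dots> < (2 * kk V - 1) * (2 * wlen wt Q)"
    using q(2) k by (intro mult_strict_left_mono) auto
  also have "\<dots> = (4 * kk V - 2) * wlen wt Q"
    by (simp add: algebra_simps)
  finally show thesis
    using that w by blast
qed

lemma far_subpath_is_level_sp:
  assumes G: "wgraph V E wt W" and covers: "fixed_covers V E wt TC" and hp: "hpath V TC s d U p"
    and s: "0 \<le> s" and k: "2 * kk V - 1 > 0"
    and far: "far_away V E wt D (VH TC U p D s0 t0) \<epsilon>1 P"
    and ab: "a \<le> b" "b < length P"
    and Q: "is_sp (V - D) E wt (P ! a) (P ! b) (subpath P a b)"
    and short: "\<forall>j. a \<le> j \<and> j \<le> b \<longrightarrow> 0 < j \<and> j < length P - 1 \<and>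
      (4 * kk V - 2) * wlen wt (subpath P a b) < \<epsilon>1 * end_dist wt P j"
  obtains i where "1 \<le> i" "i \<le> p" "reach (Lev V U p i) E (P ! a) (P ! b)"
    "subpath P a b = sp (Lev V U p i) E wt (P ! a) (P ! b)"
proof -
  define Q where "Q = subpath P a b"
  have QV: "set Q \<subseteq> V - D"
    using Q unfolding Q_def is_sp_def walk_betw_def walk_def by auto
  obtain z where z: "z \<in> set Q" and Q_Lev: "set Q \<subseteq> Lev V U p (level U p z)"
    using ex_max_level[of "set Q" V U p] QV subpath_not_Nil[OF ab] unfolding Q_def by blast
  define i where "i = level U p z"
  have i: "1 \<le> i" "i \<le> p"
    using level_spec(1,2)[OF hp] z QV unfolding i_def by auto
  have "is_sp (Lev V U p i) E wt (P ! a) (P ! b) Q"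
  proof (rule ccontr)
    assume "\<not> ?thesis"
    then obtain w where w: "w \<in> VH TC U p D s0 t0" "reach (V - D) E z w"
      and close: "dist (V - D) E wt z w < (4 * kk V - 2) * wlen wt Q"
      using not_level_sp_close_to_VH[OF G covers hp s k Q[folded Q_def] z Q_Lev] unfolding i_def by blast
    obtain j where j: "a \<le> j" "j \<le> b" "P ! j = z"
      using in_set_subpath[OF ab] z unfolding Q_def by blast
    have "0 < j" "j < length P - 1" "reach (V - D) E (P ! j) w"
      using short j w(2) by auto
    then have "\<epsilon>1 * end_dist wt P j < dist (V - D) E wt (P ! j) w"
      using far_awayD[OF far _ _ w(1)] by blast
    then show False
      using close short j unfolding Q_def by fastforce
  qed
  then have "sp (Lev V U p i) E wt (P ! a) (P ! b) = Q"
    by (rule sp_eqI[OF G, rotated]) (simp add: Lev_def)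
  moreover have "reach (Lev V U p i) E (P ! a) (P ! b)"
    using \<open>is_sp (Lev V U p i) E wt (P ! a) (P ! b) Q\<close> unfolding is_sp_def reach_def by blast
  ultimately show thesis
    using that[OF i] unfolding Q_def by simp
qed

lemma short_subinterval:
  assumes P: "walk X F P" "\<forall>e\<in>F. 1 \<le> wt e" and nonneg: "0 \<le> c" "0 \<le> \<epsilon>"
    and ab: "1 \<le> a" "b < length P - 1"
    and short: "c * wlen wt (subpath P a b) < \<epsilon> * L" "\<forall>j. a \<le> j \<and> j \<le> b \<longrightarrow> L \<le> end_dist wt P j"
    and sub: "a \<le> a'" "a' \<le> b'" "b' \<le> b"
  shows "\<forall>j. a' \<le> j \<and> j \<le> b' \<longrightarrow> 0 < j \<and> j < length P - 1 \<and>
    c * wlen wt (subpath P a' b') < \<epsilon> * end_dist wt P j"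
proof (intro allI impI conjI)
  fix j assume j: "a' \<le> j \<and> j \<le> b'"
  then show "0 < j" "j < length P - 1"
    using sub ab by auto
  have "c * wlen wt (subpath P a' b') \<le> c * wlen wt (subpath P a b)"
    using wlen_subpath_mono[OF P sub] ab nonneg(1) by (intro mult_left_mono) auto
  also have "\<dots> < \<epsilon> * L"
    by (rule short(1))
  also have "\<dots> \<le> \<epsilon> * end_dist wt P j"
    using short(2) j sub nonneg(2) by (intro mult_left_mono) auto
  finally show "c * wlen wt (subpath P a' b') < \<epsilon> * end_dist wt P j" .
qed

lemma far_short_interval_is_bipath:
  assumes G: "wgraph V E wt W" and covers: "fixed_covers V E wt TC" and hp: "hpath V TC s d U p"
    and s: "0 \<le> s" and k: "2 * kk V - 1 > 0" and \<epsilon>1: "0 \<le> \<epsilon>1"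
    and p1: "is_sp (V - D) E wt u v p1" and p2: "is_sp (V - D) E wt v w p2" and P: "P = pcat p1 p2"
    and far: "far_away V E wt D (VH TC U p D s0 t0) \<epsilon>1 P"
    and ab: "1 \<le> a" "a \<le> b" "b < length P - 1"
    and short: "(4 * kk V - 2) * wlen wt (subpath P a b) < \<epsilon>1 * L"
      "\<forall>j. a \<le> j \<and> j \<le> b \<longrightarrow> L \<le> end_dist wt P j"
  shows "\<exists>i j m. 1 \<le> i \<and> i \<le> p \<and> 1 \<le> j \<and> j \<le> p \<and> a \<le> m \<and> m \<le> b \<and>
    reach (Lev V U p i) E (P ! a) (P ! m) \<and> reach (Lev V U p j) E (P ! m) (P ! b) \<and>
    subpath P a b = pcat (sp (Lev V U p i) E wt (P ! a) (P ! m)) (sp (Lev V U p j) E wt (P ! m) (P ! b))"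
proof -
  have walkP: "walk (V - D) E P"
    using walk_betw_pcat[of "V - D" E u v p1 w p2] p1 p2 P by (simp add: is_sp_def walk_betw_def)
  have len: "b < length P"
    using ab by simp
  then obtain m where m: "a \<le> m" "m \<le> b"
    and sp_am: "is_sp (V - D) E wt (P ! a) (P ! m) (subpath P a m)"
    and sp_mb: "is_sp (V - D) E wt (P ! m) (P ! b) (subpath P m b)"
    by (rule pcat_is_sp_split[OF p1 p2 ab(2), folded P])
  have "0 \<le> 4 * kk V - 2"
    using k by simp
  note short' = short_subinterval[OF walkP wgraph_wt_ge_1[OF G] this \<epsilon>1 ab(1,3) short]
  have "m < length P"
    using m(2) len by simp
  then obtain i where i: "1 \<le> i" "i \<le> p" "reach (Lev V U p i) E (P ! a) (P ! m)"
    "subpath P a m = sp (Lev V U p i) E wt (P ! a) (P ! m)"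
    by (rule far_subpath_is_level_sp[OF G covers hp s k far m(1) _ sp_am short'[OF order_refl m]])
  obtain j where j: "1 \<le> j" "j \<le> p" "reach (Lev V U p j) E (P ! m) (P ! b)"
    "subpath P m b = sp (Lev V U p j) E wt (P ! m) (P ! b)"
    by (rule far_subpath_is_level_sp[OF G covers hp s k far m(2) len sp_mb short'[OF m order_refl]])
  have "subpath P a b = pcat (subpath P a m) (subpath P m b)"
    using m ab by (intro subpath_split) auto
  then show ?thesis
    using i j m by (intro exI[of _ i] exI[of _ j] exI[of _ m]) simp
qed

lemma far_segment_is_bipath:
  assumes G: "wgraph V E wt W" and covers: "fixed_covers V E wt TC" and hp: "hpath V TC s d U p"
    and s: "0 \<le> s" and k: "2 * kk V - 1 > 0" and \<epsilon>5: "0 < \<epsilon>5" "(4 * kk V - 2) * \<epsilon>5 = \<epsilon>1"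
    and p1: "is_sp (V - D) E wt u v p1" and p2: "is_sp (V - D) E wt v w p2" and P: "P = pcat p1 p2"
    and far: "far_away V E wt D (VH TC U p D s0 t0) \<epsilon>1 P"
    and C: "C \<in> segments wt \<epsilon>5 P"
  shows "\<exists>i j m. 1 \<le> i \<and> i \<le> p \<and> 1 \<le> j \<and> j \<le> p \<and> Min C \<le> m \<and> m \<le> Max C \<and>
    reach (Lev V U p i) E (P ! Min C) (P ! m) \<and> reach (Lev V U p j) E (P ! m) (P ! Max C) \<and>
    subpath P (Min C) (Max C) =
      pcat (sp (Lev V U p i) E wt (P ! Min C) (P ! m)) (sp (Lev V U p j) E wt (P ! m) (P ! Max C))"
proof -
  have "walk (V - D) E P"
    using walk_betw_pcat[of "V - D" E u v p1 w p2] p1 p2 P by (simp add: is_sp_def walk_betw_def)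
  note segment = segment_short[OF this wgraph_wt_ge_1[OF G] \<epsilon>5(1) C]
  obtain L where L: "wlen wt (subpath P (Min C) (Max C)) < \<epsilon>5 * L"
    "\<forall>j. Min C \<le> j \<and> j \<le> Max C \<longrightarrow> L \<le> end_dist wt P j"
    using segment(4) by blast
  have "(4 * kk V - 2) * wlen wt (subpath P (Min C) (Max C)) < (4 * kk V - 2) * (\<epsilon>5 * L)"
    using L(1) k by (intro mult_strict_left_mono) auto
  also have "\<dots> = \<epsilon>1 * L"
    using \<epsilon>5(2) by (simp add: mult.assoc[symmetric])
  finally have "(4 * kk V - 2) * wlen wt (subpath P (Min C) (Max C)) < \<epsilon>1 * L" .
  moreover have "0 \<le> \<epsilon>1"
    using \<epsilon>5 k mult_pos_pos[of "4 * kk V - 2" \<epsilon>5] by simp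
  ultimately show ?thesis
    using far_short_interval_is_bipath[OF G covers hp s k _ p1 p2 P far segment(1-3) _ L(2)] by blast
qed

lemma kk_gt_half: "3 \<le> card V \<Longrightarrow> 1 / 2 < kk V"
proof -
  have "ln (inverse (3::real)) \<le> inverse 3 - 1"
    by (rule ln_le_minus_one) simp
  moreover have "ln (inverse (3::real)) = - ln 3"
    by (rule ln_inverse)
  ultimately have "2 / 3 \<le> ln (3::real)"
    by simp
  moreover assume "3 \<le> card V"
  then have "ln 3 \<le> ln (real (card V))"
    by simp
  ultimately show ?thesis
    unfolding kk_def by simp
qed

theorem theorem4p9:
  fixes V :: "'a set" and E :: "'a set set" and wt :: "'a set \<Rightarrow> real" and W :: real
    and TC :: "'a set \<Rightarrow> 'a set \<Rightarrow> 'a \<Rightarrow> 'a tree"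
    and d :: nat and c :: real and D :: "'a set"
    and U :: "nat \<Rightarrow> 'a set" and p :: nat and s0 t0 u v w :: 'a
    and \<epsilon> \<epsilon>1 \<epsilon>5 :: real
  assumes G: "wgraph V E wt W"
    and covers: "fixed_covers V E wt TC"
    and d2: "d \<ge> 2" and c1: "c \<ge> 1"
    and hp: "hpath V TC (sbound d c (card V)) d U p"
    and DV: "D \<subseteq> V" and Dcard: "card D \<le> d"
    and Dok: "D_ok TC (sbound d c (card V)) U p D"
    and s0t0: "s0 \<in> V - D" "t0 \<in> V - D"
    and eps: "\<epsilon> > 0" "\<epsilon>1 = \<epsilon> / (2 + \<epsilon>)" "\<epsilon>5 = \<epsilon>1 / (4 * kk V - 2)"
    and uvw: "u \<in> V - D" "v \<in> V - D" "w \<in> V - D"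
    and conn: "reach (V - D) E u v" "reach (V - D) E v w"
    and far: "far_away V E wt D (VH TC U p D s0 t0) \<epsilon>1
                (pcat (sp (V - D) E wt u v) (sp (V - D) E wt v w))"
  shows "seg_bipath V E wt U p \<epsilon>5 (pcat (sp (V - D) E wt u v) (sp (V - D) E wt v w))"
proof -
  have p1: "is_sp (V - D) E wt u v (sp (V - D) E wt u v)"
    and p2: "is_sp (V - D) E wt v w (sp (V - D) E wt v w)"
    using is_sp_sp[OF G _ conn(1)] is_sp_sp[OF G _ conn(2)] by auto
  have k: "2 * kk V - 1 > 0"
    using kk_gt_half G unfolding wgraph_def by fastforce
  then have \<epsilon>5: "0 < \<epsilon>5" "(4 * kk V - 2) * \<epsilon>5 = \<epsilon>1"
    using eps by auto
  have s: "0 \<le> sbound d c (card V)"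
    unfolding sbound_def by simp
  show ?thesis
    unfolding seg_bipath_def
    using far_segment_is_bipath[OF G covers hp s k \<epsilon>5 p1 p2 refl far] by blast
qed

end
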